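(* In the setting of the context, $D^{\Lambda_W}$ is $C$-symmetric (i.e. $D^{\Lambda_W}C=-CD^{\Lambda_W}$) if and only if $\Lambda_W=\Lambda_C$. If $\Lambda=\{(f,f')\in\mathcal F\oplus\mathcal F:Af=Bf'\}$ for linear operators $A,B$ in $\mathcal F$, this occurs if and only if there exists a linear bijection $X$ on $\mathcal F$ such that $\overline B\,W\widetilde V_CW^{-1}=XA$ and $\overline A\,W\widetilde V_CW^{-1}=XB$. Furthermore, for $i\in\{p,c,r,d,ess\}$, $$\lambda\in\sigma_i(D^{\Lambda_W})\iff-\overline\lambda\in\sigma_i(D^{\Lambda_C}).$$ In particular, if $D^{\Lambda_W}$ is $C$-symmetric, then its spectrum is symmetric with respect to reflection over the imaginary axis.
   Context: Let $m\ge0$. A finite oriented metric graph $\mathbf G$ has a finite nonempty vertex set $\mathcal V$, finite sets $\mathcal I$ (internal) and $\mathcal E$ (external) of edges, $\mathcal J=\mathcal I\cup\mathcal E\ne\emptyset$, no loops. Each internal edge $i$ is identified with $I_i=(a_i,b_i)$, $a_i$, $b_i$ corresponding to its initial and terminal vertex. An external edge $e$ is identified with $(a_e,+\infty)$ ($\rho(e)=-1$) or $(-\infty,b_e)$ ($\rho(e)=1$), finite endpoint $\partial e$ corresponding to its vertex. $\mathscr H=\bigoplus_jL^2(I_j;\mathbb C^2)$, $\widetilde H^1=\bigoplus_jH^1(I_j;\mathbb C^2)$, $\Phi=(\phi_j)_j$; $D^{max}$ acts edgewise by $-i\sigma_1\phi_j'+m\sigma_3\phi_j$ ($\sigma_1=\begin{pmatrix}0&1\\1&0\end{pmatrix}$,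 $\sigma_3=\operatorname{diag}(1,-1)$). $\mathcal G=\bigoplus_j\mathcal G_j$, $\mathcal G_i=\mathbb C^2$, $\mathcal G_e=\mathbb C$; $\Gamma^k=\bigoplus_j\Gamma^k_j$, $\Gamma^1_i\Phi=(\phi_i^1(a_i),\phi_i^1(b_i))^T$, $\Gamma^2_i\Phi=(i\phi_i^2(a_i),-i\phi_i^2(b_i))^T$, $\Gamma^1_e\Phi=\phi_e^1(\partial e)$, $\Gamma^2_e\Phi=-i\rho(e)\phi^2_e(\partial e)$. Vertex space $\mathcal F=\bigoplus_v\mathbb C^{\deg v}$; coordinates of $\mathcal G$, $\mathcal F$ are labelled by pairs $(j,v)$, ordered in $\mathcal G$ edge by edge (initial vertex first for internal edges) and in $\mathcal F$ vertex by vertex (then by the fixed edge order); $W:\mathcal G\to\mathcal F$ is the permutation matrix sending coordinate $(j,v)$ of $\mathcal G$ to coordinate $(j,v)$ of $\mathcal F$. $C\Phi=(\sigma_1\overline{\phi_j})_j$ (antilinear). $\widetilde V_C=\bigoplus_j\widetilde V_{C,j}$ is the linear map on $\mathcal G$ with $\widetilde V_{C,j}\omega_j=i\sigma_3\omega_j$ for $j\in\mathcal I$ and $\widetilde V_{C,j}\omega_j=-i\rho(j)\omega_j$ for $j\in\mathcal E$, and $V_C\omega=\widetilde V_C\overline\omega$. $\Lambda$ is a linear relation in $\mathcal F$; $\Lambda_W=\{(f,f')\in\mathcal G\oplus\mathcal G:(Wf,Wf')\in\Lambda\}$; $\Lambda_C=\{(V_CW^{-1}f',V_CW^{-1}f):(f,f')\in\Lambda\}$;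 for a relation $\Theta$ in $\mathcal G$, $D^{\Theta}$ is the restriction of $D^{max}$ to $\{\Phi:(\Gamma^1\Phi,\Gamma^2\Phi)\in\Theta\}$. $\sigma_p,\sigma_c,\sigma_r$ are the point, continuous and residual spectrum; $\sigma_d$ the isolated eigenvalues of finite algebraic multiplicity; $\sigma_{ess}=\sigma\setminus\sigma_d$. *)

theory Defs
  imports "HOL-Analysis.Analysis"
begin

text \<open>The list g_edges fixes the edge order
 (its set is the edge set J), g_verts fixes the vertex order (its set is V).
 g_int is the set of internal edges; the external edges are J - g_int.
 For an internal edge i: g_ini i / g_ter i are its initial / terminal vertex and
 I_i = (g_a i, g_b i).  For an external edge e: g_ini e is its vertex, g_rho e is rho(e),
 and I_e = (g_a e, +inf) if rho(e) = -1, I_e = (-inf, g_b e) if rho(e) = 1.\<close>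

record ('j, 'v) mgraph =
  g_edges :: "'j list"
  g_verts :: "'v list"
  g_int   :: "'j set"
  g_ini   :: "'j \<Rightarrow> 'v"
  g_ter   :: "'j \<Rightarrow> 'v"
  g_a     :: "'j \<Rightarrow> real"
  g_b     :: "'j \<Rightarrow> real"
  g_rho   :: "'j \<Rightarrow> real"

definition JJ :: "('j,'v) mgraph \<Rightarrow> 'j set" where
  "JJ G = set (g_edges G)"

definition EE :: "('j,'v) mgraph \<Rightarrow> 'j set" where
  "EE G = JJ G - g_int G"

definition wf_graph :: "('j,'v) mgraph \<Rightarrow> bool" where
  "wf_graph G \<longleftrightarrow> distinct (g_edges G) \<and> distinct (g_verts G)
     \<and> g_edges G \<noteq> [] \<and> g_verts G \<noteq> [] \<and> g_int G \<subseteq> JJ G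
     \<and> (\<forall>i\<in>g_int G. g_ini G i \<in> set (g_verts G) \<and> g_ter G i \<in> set (g_verts G)
            \<and> g_ini G i \<noteq> g_ter G i \<and> g_a G i < g_b G i)
     \<and> (\<forall>e\<in>EE G. g_ini G e \<in> set (g_verts G) \<and> (g_rho G e = -1 \<or> g_rho G e = 1))"

definition Ij :: "('j,'v) mgraph \<Rightarrow> 'j \<Rightarrow> real set" where
  "Ij G j = (if j \<in> g_int G then {g_a G j <..< g_b G j}
             else if g_rho G j = -1 then {g_a G j <..} else {..< g_b G j})"

text \<open>Coordinates of the space G (edge by edge, initial vertex first) and of the
 vertex space F (vertex by vertex, then by edge order), labelled by pairs (j,v).\<close>

definition glabels :: "('j,'v) mgraph \<Rightarrow> ('j \<times> 'v) list" where
  "glabels G = concat (map (\<lambda>j. if j \<in> g_int G then [(j, g_ini G j), (j, g_ter G j)]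
                                  else [(j, g_ini G j)]) (g_edges G))"

definition incident :: "('j,'v) mgraph \<Rightarrow> 'j \<Rightarrow> 'v \<Rightarrow> bool" where
  "incident G j v = (if j \<in> g_int G then g_ini G j = v \<or> g_ter G j = v else g_ini G j = v)"

definition flabels :: "('j,'v) mgraph \<Rightarrow> ('j \<times> 'v) list" where
  "flabels G = concat (map (\<lambda>v. map (\<lambda>j. (j, v)) (filter (\<lambda>j. incident G j v) (g_edges G)))
                           (g_verts G))"

definition NN :: "('j,'v) mgraph \<Rightarrow> nat" where
  "NN G = length (glabels G)"

section \<open>Finite-dimensional linear algebra on C^N (vectors nat => complex, zero beyond N)\<close>

type_synonym cvec = "nat \<Rightarrow> complex"
type_synonym cmat = "nat \<Rightarrow> nat \<Rightarrow> complex"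

definition vecs :: "nat \<Rightarrow> cvec set" where
  "vecs n = {f. \<forall>k\<ge>n. f k = 0}"

definition mv :: "nat \<Rightarrow> cmat \<Rightarrow> cvec \<Rightarrow> cvec" where
  "mv n M f = (\<lambda>k. if k < n then (\<Sum>l<n. M k l * f l) else 0)"

definition mm :: "nat \<Rightarrow> cmat \<Rightarrow> cmat \<Rightarrow> cmat" where
  "mm n M1 M2 = (\<lambda>k l. \<Sum>r<n. M1 k r * M2 r l)"

definition meq :: "nat \<Rightarrow> cmat \<Rightarrow> cmat \<Rightarrow> bool" where
  "meq n M1 M2 \<longleftrightarrow> (\<forall>k<n. \<forall>l<n. M1 k l = M2 k l)"

definition idm :: cmat where
  "idm = (\<lambda>k l. if k = l then 1 else 0)"

definition cnjm :: "cmat \<Rightarrow> cmat" where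
  "cnjm M = (\<lambda>k l. cnj (M k l))"

definition bij_mat :: "nat \<Rightarrow> cmat \<Rightarrow> bool" where
  "bij_mat n X \<longleftrightarrow> (\<exists>Y. meq n (mm n X Y) idm \<and> meq n (mm n Y X) idm)"

definition lin_rel :: "nat \<Rightarrow> (cvec \<times> cvec) set \<Rightarrow> bool" where
  "lin_rel n L \<longleftrightarrow> L \<subseteq> vecs n \<times> vecs n \<and> ((\<lambda>k. 0), (\<lambda>k. 0)) \<in> L
     \<and> (\<forall>f g f' g'. (f, f') \<in> L \<longrightarrow> (g, g') \<in> L \<longrightarrow> ((\<lambda>k. f k + g k), (\<lambda>k. f' k + g' k)) \<in> L)
     \<and> (\<forall>c f f'. (f, f') \<in> L \<longrightarrow> ((\<lambda>k. c * f k), (\<lambda>k. c * f' k)) \<in> L)"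

text \<open>The permutation matrix W : G -> F and its inverse (its transpose).\<close>
definition Wm :: "('j,'v) mgraph \<Rightarrow> cmat" where
  "Wm G = (\<lambda>k l. if k < NN G \<and> l < NN G \<and> flabels G ! k = glabels G ! l then 1 else 0)"

definition Winv :: "('j,'v) mgraph \<Rightarrow> cmat" where
  "Winv G = (\<lambda>k l. Wm G l k)"

definition Vt :: "('j,'v) mgraph \<Rightarrow> cmat" where
  "Vt G = (\<lambda>k l. if k = l \<and> k < NN G then
              (let (j, v) = glabels G ! k in
                 if j \<in> g_int G then (if v = g_ini G j then \<i> else - \<i>)
                 else - \<i> * complex_of_real (g_rho G j))
            else 0)"

definition VC :: "('j,'v) mgraph \<Rightarrow> cvec \<Rightarrow> cvec" where
  "VC G w = mv (NN G) (Vt G) (\<lambda>k. cnj (w k))"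

definition LamW :: "('j,'v) mgraph \<Rightarrow> (cvec \<times> cvec) set \<Rightarrow> (cvec \<times> cvec) set" where
  "LamW G L = {(f, f'). f \<in> vecs (NN G) \<and> f' \<in> vecs (NN G)
                  \<and> (mv (NN G) (Wm G) f, mv (NN G) (Wm G) f') \<in> L}"

definition LamC :: "('j,'v) mgraph \<Rightarrow> (cvec \<times> cvec) set \<Rightarrow> (cvec \<times> cvec) set" where
  "LamC G L = {(VC G (mv (NN G) (Winv G) f'), VC G (mv (NN G) (Winv G) f)) | f f'. (f, f') \<in> L}"

text \<open>Elements of the Hilbert space are represented by functions Phi j t = (phi_j^1(t), phi_j^2(t));
 only the values on I_j, j in J, matter, and elements are identified when the seminorm of the
 difference vanishes (a.e. equality).\<close>

type_synonym 'j fn = "'j \<Rightarrow> real \<Rightarrow> complex \<times> complex"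

definition L2on :: "real set \<Rightarrow> (real \<Rightarrow> complex) \<Rightarrow> bool" where
  "L2on S u \<longleftrightarrow> u \<in> borel_measurable (lebesgue_on S)
                 \<and> integrable (lebesgue_on S) (\<lambda>t. (cmod (u t))\<^sup>2)"

text \<open>u is (the continuous representative of) an H^1 function on the interval S with weak derivative g.\<close>
definition isderiv :: "real set \<Rightarrow> (real \<Rightarrow> complex) \<Rightarrow> (real \<Rightarrow> complex) \<Rightarrow> bool" where
  "isderiv S u g \<longleftrightarrow> L2on S u \<and> L2on S g
     \<and> (\<forall>x\<in>S. \<forall>y\<in>S. x \<le> y \<longrightarrow> (g has_integral (u y - u x)) {x..y})"

definition Hsp :: "('j,'v) mgraph \<Rightarrow> 'j fn set" where
  "Hsp G = {Phi. \<forall>j\<in>JJ G. L2on (Ij G j) (\<lambda>t. fst (Phi j t)) \<and> L2on (Ij G j) (\<lambda>t. snd (Phi j t))}"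

definition nrm :: "('j,'v) mgraph \<Rightarrow> 'j fn \<Rightarrow> real" where
  "nrm G Phi = sqrt (\<Sum>j\<in>JJ G. LINT t|lebesgue_on (Ij G j).
                        (cmod (fst (Phi j t)))\<^sup>2 + (cmod (snd (Phi j t)))\<^sup>2)"

definition fsub :: "'j fn \<Rightarrow> 'j fn \<Rightarrow> 'j fn" where
  "fsub Phi Psi = (\<lambda>j t. (fst (Phi j t) - fst (Psi j t), snd (Phi j t) - snd (Psi j t)))"

definition fscale :: "complex \<Rightarrow> 'j fn \<Rightarrow> 'j fn" where
  "fscale c Phi = (\<lambda>j t. (c * fst (Phi j t), c * snd (Phi j t)))"

definition fneg :: "'j fn \<Rightarrow> 'j fn" where
  "fneg Phi = (\<lambda>j t. (- fst (Phi j t), - snd (Phi j t)))"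

definition lincomb :: "'j fn list \<Rightarrow> (nat \<Rightarrow> complex) \<Rightarrow> 'j fn" where
  "lincomb fs c = (\<lambda>j t. ((\<Sum>k<length fs. c k * fst ((fs ! k) j t)),
                          (\<Sum>k<length fs. c k * snd ((fs ! k) j t))))"

definition Cop :: "'j fn \<Rightarrow> 'j fn" where
  "Cop Phi = (\<lambda>j t. (cnj (snd (Phi j t)), cnj (fst (Phi j t))))"

definition Dmax :: "('j,'v) mgraph \<Rightarrow> real \<Rightarrow> ('j fn \<times> 'j fn) set" where
  "Dmax G m = {(Phi, Psi). Phi \<in> Hsp G \<and> Psi \<in> Hsp G \<and>
     (\<exists>Phi'. (\<forall>j\<in>JJ G. isderiv (Ij G j) (\<lambda>t. fst (Phi j t)) (\<lambda>t. fst (Phi' j t))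
                      \<and> isderiv (Ij G j) (\<lambda>t. snd (Phi j t)) (\<lambda>t. snd (Phi' j t)))
        \<and> nrm G (fsub Psi (\<lambda>j t. (- \<i> * snd (Phi' j t) + complex_of_real m * fst (Phi j t),
                                   - \<i> * fst (Phi' j t) - complex_of_real m * snd (Phi j t)))) = 0)}"

definition bl :: "real \<Rightarrow> (real \<Rightarrow> complex) \<Rightarrow> complex" where
  "bl a u = Lim (at_right a) u"

definition br :: "real \<Rightarrow> (real \<Rightarrow> complex) \<Rightarrow> complex" where
  "br b u = Lim (at_left b) u"

definition bdry :: "('j,'v) mgraph \<Rightarrow> 'j \<Rightarrow> (real \<Rightarrow> complex) \<Rightarrow> complex" where
  "bdry G e u = (if g_rho G e = -1 then bl (g_a G e) u else br (g_b G e) u)"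

definition gam1 :: "('j,'v) mgraph \<Rightarrow> 'j fn \<Rightarrow> cvec" where
  "gam1 G Phi = (\<lambda>k. if k < NN G then
      (let (j, v) = glabels G ! k; u = (\<lambda>t. fst (Phi j t)) in
        if j \<in> g_int G then (if v = g_ini G j then bl (g_a G j) u else br (g_b G j) u)
        else bdry G j u)
     else 0)"

definition gam2 :: "('j,'v) mgraph \<Rightarrow> 'j fn \<Rightarrow> cvec" where
  "gam2 G Phi = (\<lambda>k. if k < NN G then
      (let (j, v) = glabels G ! k; u = (\<lambda>t. snd (Phi j t)) in
        if j \<in> g_int G then (if v = g_ini G j then \<i> * bl (g_a G j) u else - \<i> * br (g_b G j) u)
        else - \<i> * complex_of_real (g_rho G j) * bdry G j u)
     else 0)"

definition DTheta :: "('j,'v) mgraph \<Rightarrow> real \<Rightarrow> (cvec \<times> cvec) set \<Rightarrow> ('j fn \<times> 'j fn) set" where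
  "DTheta G m Th = {(Phi, Psi) \<in> Dmax G m. (gam1 G Phi, gam2 G Phi) \<in> Th}"

text \<open>C-symmetry D C = - C D (as operators, including domains).  Graph of DC is
 {(Phi,Psi). (C Phi, Psi) in D}; graph of -CD is {(Phi,Psi). (Phi, -C Psi) in D}.\<close>
definition Csym :: "('j fn \<times> 'j fn) set \<Rightarrow> bool" where
  "Csym D \<longleftrightarrow> (\<forall>Phi Psi. (Cop Phi, Psi) \<in> D \<longleftrightarrow> (Phi, fneg (Cop Psi)) \<in> D)"

definition in_resolvent :: "'a fn set \<Rightarrow> ('a fn \<Rightarrow> real) \<Rightarrow> ('a fn \<times> 'a fn) set \<Rightarrow> complex \<Rightarrow> bool" where
  "in_resolvent H nn D lam \<longleftrightarrow>
     (\<forall>(Phi, Psi)\<in>D. nn (fsub Psi (fscale lam Phi)) = 0 \<longrightarrow> nn Phi = 0)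
   \<and> (\<forall>g\<in>H. \<exists>(Phi, Psi)\<in>D. nn (fsub g (fsub Psi (fscale lam Phi))) = 0)
   \<and> (\<exists>c. \<forall>(Phi, Psi)\<in>D. nn Phi \<le> c * nn (fsub Psi (fscale lam Phi)))"

definition spec :: "'a fn set \<Rightarrow> ('a fn \<Rightarrow> real) \<Rightarrow> ('a fn \<times> 'a fn) set \<Rightarrow> complex set" where
  "spec H nn D = {lam. \<not> in_resolvent H nn D lam}"

definition spec_p :: "'a fn set \<Rightarrow> ('a fn \<Rightarrow> real) \<Rightarrow> ('a fn \<times> 'a fn) set \<Rightarrow> complex set" where
  "spec_p H nn D = {lam. \<exists>(Phi, Psi)\<in>D. nn Phi \<noteq> 0 \<and> nn (fsub Psi (fscale lam Phi)) = 0}"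

definition dense_range :: "'a fn set \<Rightarrow> ('a fn \<Rightarrow> real) \<Rightarrow> ('a fn \<times> 'a fn) set \<Rightarrow> complex \<Rightarrow> bool" where
  "dense_range H nn D lam \<longleftrightarrow>
     (\<forall>g\<in>H. \<forall>e>0. \<exists>(Phi, Psi)\<in>D. nn (fsub g (fsub Psi (fscale lam Phi))) < e)"

definition spec_c :: "'a fn set \<Rightarrow> ('a fn \<Rightarrow> real) \<Rightarrow> ('a fn \<times> 'a fn) set \<Rightarrow> complex set" where
  "spec_c H nn D = {lam \<in> spec H nn D. lam \<notin> spec_p H nn D \<and> dense_range H nn D lam}"

definition spec_r :: "'a fn set \<Rightarrow> ('a fn \<Rightarrow> real) \<Rightarrow> ('a fn \<times> 'a fn) set \<Rightarrow> complex set" where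
  "spec_r H nn D = {lam \<in> spec H nn D. lam \<notin> spec_p H nn D \<and> \<not> dense_range H nn D lam}"

text \<open>Generalized eigenspace: union over k of ker (D - lam)^k.\<close>
definition gen_eig :: "'a fn set \<Rightarrow> ('a fn \<Rightarrow> real) \<Rightarrow> ('a fn \<times> 'a fn) set \<Rightarrow> complex \<Rightarrow> 'a fn set" where
  "gen_eig H nn D lam = {Phi. \<exists>k Phis Psis. Phis 0 = Phi \<and> (\<forall>n\<le>k. Phis n \<in> H)
      \<and> (\<forall>n<k. (Phis n, Psis n) \<in> D
               \<and> nn (fsub (fsub (Psis n) (fscale lam (Phis n))) (Phis (Suc n))) = 0)
      \<and> nn (Phis k) = 0}"

definition fin_alg_mult :: "'a fn set \<Rightarrow> ('a fn \<Rightarrow> real) \<Rightarrow> ('a fn \<times> 'a fn) set \<Rightarrow> complex \<Rightarrow> bool" where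
  "fin_alg_mult H nn D lam \<longleftrightarrow> (\<exists>fs. set fs \<subseteq> H \<and>
      (\<forall>Phi\<in>gen_eig H nn D lam. \<exists>c. nn (fsub Phi (lincomb fs c)) = 0))"

definition spec_d :: "'a fn set \<Rightarrow> ('a fn \<Rightarrow> real) \<Rightarrow> ('a fn \<times> 'a fn) set \<Rightarrow> complex set" where
  "spec_d H nn D = {lam \<in> spec_p H nn D.
      (\<exists>e>0. \<forall>mu\<in>spec H nn D. mu \<noteq> lam \<longrightarrow> e \<le> cmod (mu - lam))
      \<and> fin_alg_mult H nn D lam}"

definition spec_ess :: "'a fn set \<Rightarrow> ('a fn \<Rightarrow> real) \<Rightarrow> ('a fn \<times> 'a fn) set \<Rightarrow> complex set" where
  "spec_ess H nn D = spec H nn D - spec_d H nn D"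

end

theory Submission
  imports Defs "HOL-Library.Function_Algebras"
begin

(*
  If Phi' is the weak derivative of Phi, then C Phi' is that of C Phi, and the Dirac expression
  obeys dirac (C Phi) (C Phi') = - C (dirac Phi Phi') for every real mass m.  On the boundary,
  Gamma2 is the trace of phi^2 multiplied by the diagonal of tilde V_C, whose entries are +-i,
  which gives Gamma1 (C Phi) = V_C Gamma2 Phi and Gamma2 (C Phi) = V_C Gamma1 Phi.  Hence the graph
  of D^Lambda_C is the image of that of D^Lambda_W under this map: D^Lambda_C = - C D^Lambda_W C.
  As C is antiunitary, - C (D - lam) C = D^Lambda_C + cnj lam, so injectivity, (dense) range,
  boundedness of the inverse, Jordan chains and isolation all transfer from lam to - cnj lam.

  C-symmetry says D^Lambda_W = - C D^Lambda_W C = D^Lambda_C.  Since every boundary value is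
  attained in D^max (by linear profiles on internal and decaying exponentials on external edges),
  D^Theta determines Theta, so this is Lambda_W = Lambda_C.  For Lambda = ker (A, -B), conjugating
  the equation shows that Lambda_C is the W-pullback of ker (A', -B') with
  A' = cnj B W tilde V_C W^-1 and B' = cnj A W tilde V_C W^-1.  Two kernels ker (A, -B) and
  ker (A', -B') agree iff A u - B u' |-> A' u - B' u' is a well defined injection on the range
  of (A, -B); extending it to an automorphism X of C^N gives A' = X A and B' = X B.
*)

section \<open>Coordinates and the permutation W\<close>

lemma wf_graphD:
  assumes "wf_graph G"
  shows "distinct (g_edges G)" "distinct (g_verts G)"
    "\<And>i. i \<in> g_int G \<Longrightarrow> g_ini G i \<in> set (g_verts G) \<and> g_ter G i \<in> set (g_verts G)
            \<and> g_ini G i \<noteq> g_ter G i \<and> g_a G i < g_b G i"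
    "\<And>e. e \<in> EE G \<Longrightarrow> g_ini G e \<in> set (g_verts G) \<and> (g_rho G e = -1 \<or> g_rho G e = 1)"
  using assms unfolding wf_graph_def by auto

lemma set_glabels: "set (glabels G) = {(j, v). j \<in> JJ G \<and> incident G j v}"
  unfolding glabels_def incident_def JJ_def by (auto split: if_splits)

lemma set_flabels:
  assumes "wf_graph G"
  shows "set (flabels G) = {(j, v). j \<in> JJ G \<and> incident G j v}"
proof -
  have "v \<in> set (g_verts G)" if "incident G j v" "j \<in> JJ G" for j v
    using that wf_graphD[OF assms] unfolding incident_def EE_def by (auto split: if_splits)
  then show ?thesis unfolding flabels_def JJ_def by auto
qed

lemma distinct_glabels:
  assumes "wf_graph G"
  shows "distinct (glabels G)"
  unfolding glabels_def
proof (rule distinct_concat)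
  let ?f = "\<lambda>j. if j \<in> g_int G then [(j, g_ini G j), (j, g_ter G j)] else [(j, g_ini G j)]"
  have "inj_on ?f (set (g_edges G))"
    by (rule inj_onI) (auto split: if_splits)
  then show "distinct (map ?f (g_edges G))"
    using wf_graphD(1)[OF assms] by (simp add: distinct_map)
  show "\<And>ys. ys \<in> set (map ?f (g_edges G)) \<Longrightarrow> distinct ys"
    using wf_graphD(3)[OF assms] by auto
  show "\<And>ys zs. ys \<in> set (map ?f (g_edges G)) \<Longrightarrow> zs \<in> set (map ?f (g_edges G)) \<Longrightarrow> ys \<noteq> zs
      \<Longrightarrow> set ys \<inter> set zs = {}"
    by (auto split: if_splits)
qed

lemma distinct_flabels:
  assumes "wf_graph G"
  shows "distinct (flabels G)"
  unfolding flabels_def distinct_concat_iff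
proof (intro conjI allI impI)
  let ?f = "\<lambda>v. map (\<lambda>j. (j, v)) (filter (\<lambda>j. incident G j v) (g_edges G))"
  let ?V = "filter (\<lambda>v. ?f v \<noteq> []) (g_verts G)"
  have "removeAll [] (map ?f (g_verts G)) = map ?f ?V"
    by (induction "g_verts G") (auto simp: removeAll_filter_not_eq filter_map o_def)
  moreover have "inj_on ?f (set ?V)"
  proof (rule inj_onI)
    fix x y assume "x \<in> set ?V" "?f x = ?f y"
    then obtain j where "j \<in> set (filter (\<lambda>j. incident G j x) (g_edges G))"
      by (cases "filter (\<lambda>j. incident G j x) (g_edges G)") auto
    then have "(j, x) \<in> set (?f y)"
      using \<open>?f x = ?f y\<close> by (metis (no_types, lifting) image_eqI list.set_map)
    then show "x = y" by auto
  qed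
  ultimately show "distinct (removeAll [] (map ?f (g_verts G)))"
    using wf_graphD(2)[OF assms] by (simp add: distinct_map)
  show "\<And>ys. ys \<in> set (map ?f (g_verts G)) \<Longrightarrow> distinct ys"
    using wf_graphD(1)[OF assms] by (auto simp: distinct_map inj_on_def)
  show "\<And>ys zs. ys \<in> set (map ?f (g_verts G)) \<and> zs \<in> set (map ?f (g_verts G)) \<and> ys \<noteq> zs
      \<Longrightarrow> set ys \<inter> set zs = {}"
    by auto
qed

lemma length_flabels:
  assumes "wf_graph G"
  shows "length (flabels G) = NN G"
  using distinct_card[OF distinct_flabels[OF assms]] distinct_card[OF distinct_glabels[OF assms]]
    set_flabels[OF assms] set_glabels unfolding NN_def by metis

lemma glabels_nth:
  assumes "k < NN G" "glabels G ! k = (j, v)"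
  shows "j \<in> JJ G" "incident G j v"
proof -
  have "(j, v) \<in> set (glabels G)"
    using assms unfolding NN_def by (metis nth_mem)
  then show "j \<in> JJ G" "incident G j v" by (auto simp: set_glabels)
qed

lemma mv_in_vecs [simp]: "mv n M f \<in> vecs n"
  unfolding mv_def vecs_def by auto

lemma mv_mm: "mv n (mm n A B) f = mv n A (mv n B f)"
  unfolding mv_def mm_def
  by (auto intro!: ext sum.swap simp: sum_distrib_left sum_distrib_right mult.assoc)

lemma mv_idm:
  assumes "f \<in> vecs n"
  shows "mv n idm f = f"
proof (rule ext)
  fix k
  have "(\<Sum>l<n. idm k l * f l) = (if k < n then f k else 0)"
    by (simp add: idm_def if_distrib[of "\<lambda>x. x * f _"] sum.delta cong: if_cong)
  then show "mv n idm f k = f k"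
    using assms by (simp add: mv_def vecs_def)
qed

lemma mv_meq: "meq n M1 M2 \<Longrightarrow> mv n M1 f = mv n M2 f"
  unfolding meq_def mv_def by (auto intro!: ext sum.cong)

lemma mv_inverse: "meq n (mm n X Y) idm \<Longrightarrow> f \<in> vecs n \<Longrightarrow> mv n X (mv n Y f) = f"
  by (metis mv_idm mv_meq mv_mm)

definition perm_mat :: "nat \<Rightarrow> 'a list \<Rightarrow> 'a list \<Rightarrow> cmat" where
  "perm_mat n xs ys = (\<lambda>k l. if k < n \<and> l < n \<and> xs ! k = ys ! l then 1 else 0)"

lemma perm_mat_inverse:
  assumes "distinct xs" "distinct ys" "set xs = set ys" "length xs = n" "length ys = n"
  shows "meq n (mm n (perm_mat n xs ys) (perm_mat n ys xs)) idm"
  unfolding meq_def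
proof (intro allI impI)
  fix k l assume "k < n" "l < n"
  then obtain r0 where r0: "r0 < n" "ys ! r0 = xs ! k"
    using assms by (metis in_set_conv_nth nth_mem)
  have unique: "ys ! r = xs ! k \<longleftrightarrow> r = r0" if "r < n" for r
    using r0 that assms(2,5) by (metis nth_eq_iff_index_eq)
  have "xs ! k = xs ! l \<longleftrightarrow> k = l"
    using \<open>k < n\<close> \<open>l < n\<close> assms(1,4) by (simp add: nth_eq_iff_index_eq)
  then have "mm n (perm_mat n xs ys) (perm_mat n ys xs) k l
      = (\<Sum>r<n. if r = r0 then idm k l else 0)"
    unfolding mm_def perm_mat_def idm_def
    using \<open>k < n\<close> \<open>l < n\<close> r0 unique by (intro sum.cong) auto
  then show "mm n (perm_mat n xs ys) (perm_mat n ys xs) k l = idm k l"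
    using r0 by simp
qed

lemma Wm_perm_mat: "Wm G = perm_mat (NN G) (flabels G) (glabels G)"
  and Winv_perm_mat: "Winv G = perm_mat (NN G) (glabels G) (flabels G)"
  unfolding Wm_def Winv_def perm_mat_def by (auto intro!: ext)

lemma W_Winv: "wf_graph G \<Longrightarrow> meq (NN G) (mm (NN G) (Wm G) (Winv G)) idm"
  and Winv_W: "wf_graph G \<Longrightarrow> meq (NN G) (mm (NN G) (Winv G) (Wm G)) idm"
  unfolding Wm_perm_mat Winv_perm_mat
  by (rule perm_mat_inverse; simp add: distinct_flabels distinct_glabels set_flabels set_glabels
      length_flabels NN_def)+

lemma W_Winv_apply: "wf_graph G \<Longrightarrow> f \<in> vecs (NN G) \<Longrightarrow> mv (NN G) (Wm G) (mv (NN G) (Winv G) f) = f"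
  using W_Winv mv_inverse by blast

lemma Winv_W_apply: "wf_graph G \<Longrightarrow> f \<in> vecs (NN G) \<Longrightarrow> mv (NN G) (Winv G) (mv (NN G) (Wm G) f) = f"
  using Winv_W mv_inverse by blast

lemma Vt_diag_cases:
  assumes "wf_graph G" "k < NN G"
  shows "Vt G k k = \<i> \<or> Vt G k k = - \<i>"
proof -
  obtain j v where jv: "glabels G ! k = (j, v)" by fastforce
  have "j \<notin> g_int G \<Longrightarrow> j \<in> EE G"
    using glabels_nth(1)[OF assms(2) jv] by (simp add: EE_def)
  then show ?thesis
    using wf_graphD(4)[OF assms(1), of j] assms(2) jv by (auto simp: Vt_def)
qed

lemma cnj_Vt_diag: "wf_graph G \<Longrightarrow> k < NN G \<Longrightarrow> cnj (Vt G k k) = - Vt G k k"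
  using Vt_diag_cases by fastforce

lemma Vt_diag_unimodular: "wf_graph G \<Longrightarrow> k < NN G \<Longrightarrow> Vt G k k * cnj (Vt G k k) = 1"
  using Vt_diag_cases by fastforce

lemma mv_Vt: "mv (NN G) (Vt G) g k = (if k < NN G then Vt G k k * g k else 0)"
proof -
  have "(\<Sum>l<NN G. Vt G k l * g l) = (\<Sum>l<NN G. if l = k then Vt G k k * g k else 0)"
    by (rule sum.cong) (auto simp: Vt_def)
  then show ?thesis by (simp add: mv_def)
qed

lemma VC_apply: "VC G w k = (if k < NN G then Vt G k k * cnj (w k) else 0)"
  by (simp add: VC_def mv_Vt)

lemma VC_in_vecs [simp]: "VC G w \<in> vecs (NN G)"
  unfolding VC_def by simp

lemma VC_VC: "wf_graph G \<Longrightarrow> w \<in> vecs (NN G) \<Longrightarrow> VC G (VC G w) = w"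
  by (rule ext) (auto simp: VC_apply vecs_def mult.assoc Vt_diag_unimodular)

section \<open>Square integrable functions and weak derivatives\<close>

lemma L2on_bounded_linear:
  assumes "L2on S u" "bounded_linear f"
  shows "L2on S (\<lambda>t. f (u t))"
proof -
  obtain K where K: "\<And>z. norm (f z) \<le> norm z * K" "K > 0"
    using bounded_linear.pos_bounded[OF assms(2)] by blast
  have meas: "(\<lambda>t. f (u t)) \<in> borel_measurable (lebesgue_on S)"
    using assms unfolding L2on_def
    by (blast intro: borel_measurable_continuous_on linear_continuous_on)
  have "integrable (lebesgue_on S) (\<lambda>t. K\<^sup>2 * (cmod (u t))\<^sup>2)"
    using assms(1) unfolding L2on_def by auto
  then have "integrable (lebesgue_on S) (\<lambda>t. (cmod (f (u t)))\<^sup>2)"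
  proof (rule Bochner_Integration.integrable_bound)
    show "(\<lambda>t. (cmod (f (u t)))\<^sup>2) \<in> borel_measurable (lebesgue_on S)"
      using meas by measurable
    have "(cmod (f (u t)))\<^sup>2 \<le> (K * cmod (u t))\<^sup>2" for t
      using K(1)[of "u t"] by (intro power_mono) (simp_all add: mult.commute)
    then show "AE t in lebesgue_on S. norm ((cmod (f (u t)))\<^sup>2) \<le> norm (K\<^sup>2 * (cmod (u t))\<^sup>2)"
      by (intro AE_I2) (simp add: power_mult_distrib)
  qed
  then show ?thesis
    using meas unfolding L2on_def by blast
qed

lemma L2on_add:
  assumes "L2on S u" "L2on S v"
  shows "L2on S (\<lambda>t. u t + v t)"
proof -
  have meas: "(\<lambda>t. u t + v t) \<in> borel_measurable (lebesgue_on S)"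
    using assms unfolding L2on_def by auto
  have "integrable (lebesgue_on S) (\<lambda>t. 2 * (cmod (u t))\<^sup>2 + 2 * (cmod (v t))\<^sup>2)"
    using assms unfolding L2on_def by auto
  then have "integrable (lebesgue_on S) (\<lambda>t. (cmod (u t + v t))\<^sup>2)"
  proof (rule Bochner_Integration.integrable_bound)
    show "(\<lambda>t. (cmod (u t + v t))\<^sup>2) \<in> borel_measurable (lebesgue_on S)"
      using meas by measurable
    have "(cmod (u t + v t))\<^sup>2 \<le> 2 * (cmod (u t))\<^sup>2 + 2 * (cmod (v t))\<^sup>2" for t
    proof -
      have "(cmod (u t + v t))\<^sup>2 \<le> (cmod (u t) + cmod (v t))\<^sup>2"
        by (simp add: power_mono norm_triangle_ineq)
      also have "\<dots> \<le> 2 * (cmod (u t))\<^sup>2 + 2 * (cmod (v t))\<^sup>2"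
        using sum_squares_bound[of "cmod (u t)" "cmod (v t)"] by (simp add: power2_sum)
      finally show ?thesis .
    qed
    then show "AE t in lebesgue_on S.
        norm ((cmod (u t + v t))\<^sup>2) \<le> norm (2 * (cmod (u t))\<^sup>2 + 2 * (cmod (v t))\<^sup>2)"
      by (intro AE_I2) simp
  qed
  then show ?thesis
    using meas unfolding L2on_def by blast
qed

lemma L2on_diff: "L2on S u \<Longrightarrow> L2on S v \<Longrightarrow> L2on S (\<lambda>t. u t - v t)"
  using L2on_add[of S u "\<lambda>t. - v t"]
    L2on_bounded_linear[OF _ bounded_linear_minus[OF bounded_linear_ident]]
  by simp

lemma isderiv_bounded_linear:
  assumes "isderiv S u g" "bounded_linear f"
  shows "isderiv S (\<lambda>t. f (u t)) (\<lambda>t. f (g t))"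
proof -
  have "((\<lambda>t. f (g t)) has_integral f (u y) - f (u x)) {x..y}" if "x \<in> S" "y \<in> S" "x \<le> y" for x y
    using assms that has_integral_linear[of g "u y - u x" "{x..y}" f] unfolding isderiv_def
    by (simp add: o_def linear_diff[OF bounded_linear.linear])
  then show ?thesis
    using assms L2on_bounded_linear unfolding isderiv_def by blast
qed

lemma L2on_absolutely_integrable_on:
  assumes L: "L2on S g" and S: "S \<in> sets lebesgue" and T: "T \<in> lmeasurable" "T \<subseteq> S"
  shows "g absolutely_integrable_on T"
proof -
  let ?h = "\<lambda>t. (cmod (g t))\<^sup>2"
  have "integrable (lebesgue_on S) ?h"
    using L unfolding L2on_def by blast
  then have "set_integrable lebesgue S ?h"
    unfolding set_integrable_def using S by (simp add: integrable_restrict_space)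
  then have "set_integrable lebesgue T ?h"
    by (rule set_integrable_subset) (use T in auto)
  then have "(\<lambda>t. 1 + ?h t) integrable_on T"
    using T integrable_add[OF integrable_on_const] absolutely_integrable_on_def by blast
  moreover have "g \<in> borel_measurable (lebesgue_on T)"
    using L T(2) unfolding L2on_def by (blast intro: measurable_restrict_mono)
  moreover have "norm (g t) \<le> 1 + ?h t" for t
  proof -
    have "2 * cmod (g t) \<le> (cmod (g t))\<^sup>2 + 1"
      using sum_squares_bound[of "cmod (g t)" 1] by simp
    then show ?thesis
      using norm_ge_zero[of "g t"] by linarith
  qed
  ultimately show ?thesis
    using T by (intro measurable_bounded_by_integrable_imp_absolutely_integrable[of g T]) auto
qed

lemma L2on_integrable_on_Icc:
  assumes "L2on S g" "S \<in> sets lebesgue" "{a<..<c} \<subseteq> S"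
  shows "g integrable_on {a..c}"
proof (cases "a \<le> c")
  case True
  have "g integrable_on {a<..<c}"
    using L2on_absolutely_integrable_on[OF assms(1,2)] assms(3) absolutely_integrable_on_def
    by blast
  moreover have "{a..c} = insert a (insert c {a<..<c})"
    using True by auto
  ultimately show ?thesis
    using integrable_on_insert_iff by metis
qed (simp add: integrable_on_empty)

lemma isderiv_tendsto_at_right:
  assumes D: "isderiv S u g" and S: "S \<in> sets lebesgue" and "a < c" "{a<..c} \<subseteq> S"
  shows "\<exists>L. (u \<longlongrightarrow> L) (at_right a)"
proof -
  let ?F = "\<lambda>x. integral {x..c} g"
  have "g integrable_on {a..c}"
    using D assms(4) unfolding isderiv_def by (intro L2on_integrable_on_Icc[OF _ S]) auto
  then have "(?F \<longlongrightarrow> ?F a) (at_right a)"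
    using indefinite_integral_continuous_1' continuous_on_Icc_at_rightD \<open>a < c\<close> by blast
  then have "((\<lambda>x. u c - ?F x) \<longlongrightarrow> u c - ?F a) (at_right a)"
    by (intro tendsto_intros)
  moreover have "\<forall>\<^sub>F x in at_right a. u c - ?F x = u x"
  proof (rule eventually_mono[OF eventually_at_right_real[OF \<open>a < c\<close>]])
    fix x assume "x \<in> {a<..<c}"
    then have "x \<in> S" "c \<in> S"
      using assms(3,4) by auto
    with \<open>x \<in> {a<..<c}\<close> have "(g has_integral (u c - u x)) {x..c}"
      using D unfolding isderiv_def by auto
    then show "u c - ?F x = u x" by (simp add: integral_unique)
  qed
  ultimately show ?thesis
    using Lim_transform_eventually by blast
qed

lemma isderiv_tendsto_at_left:
  assumes D: "isderiv S u g" and S: "S \<in> sets lebesgue" and "c < b" "{c..<b} \<subseteq> S"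
  shows "\<exists>L. (u \<longlongrightarrow> L) (at_left b)"
proof -
  let ?F = "\<lambda>x. integral {c..x} g"
  have "g integrable_on {c..b}"
    using D assms(4) unfolding isderiv_def by (intro L2on_integrable_on_Icc[OF _ S]) auto
  then have "(?F \<longlongrightarrow> ?F b) (at_left b)"
    using indefinite_integral_continuous_1 continuous_on_Icc_at_leftD \<open>c < b\<close> by blast
  then have "((\<lambda>x. u c + ?F x) \<longlongrightarrow> u c + ?F b) (at_left b)"
    by (intro tendsto_intros)
  moreover have "\<forall>\<^sub>F x in at_left b. u c + ?F x = u x"
  proof (rule eventually_mono[OF eventually_at_left_real[OF \<open>c < b\<close>]])
    fix x assume "x \<in> {c<..<b}"
    then have "x \<in> S" "c \<in> S"
      using assms(3,4) by auto
    with \<open>x \<in> {c<..<b}\<close> have "(g has_integral (u x - u c)) {c..x}"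
      using D unfolding isderiv_def by auto
    then show "u c + ?F x = u x" by (simp add: integral_unique)
  qed
  ultimately show ?thesis
    using Lim_transform_eventually by blast
qed

definition boundary_values :: "('j,'v) mgraph \<Rightarrow> ('j \<Rightarrow> real \<Rightarrow> complex) \<Rightarrow> cvec" where
  "boundary_values G u = (\<lambda>k. if k < NN G then
      (let (j, v) = glabels G ! k in
        if j \<in> g_int G then (if v = g_ini G j then bl (g_a G j) (u j) else br (g_b G j) (u j))
        else bdry G j (u j))
     else 0)"

lemma gam1_eq_boundary_values: "gam1 G Phi = boundary_values G (\<lambda>j t. fst (Phi j t))"
  unfolding gam1_def boundary_values_def by (auto intro!: ext simp: Let_def split: prod.split)

lemma gam2_eq_boundary_values:
  "gam2 G Phi = (\<lambda>k. Vt G k k * boundary_values G (\<lambda>j t. snd (Phi j t)) k)"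
  unfolding gam2_def boundary_values_def Vt_def
  by (auto intro!: ext simp: Let_def split: prod.split)

lemma boundary_values_beyond [simp]: "NN G \<le> k \<Longrightarrow> boundary_values G u k = 0"
  unfolding boundary_values_def by simp

lemma Ij_in_sets_lebesgue: "Ij G j \<in> sets lebesgue"
  unfolding Ij_def by auto

lemma Ij_left_end:
  assumes "wf_graph G" "j \<in> g_int G \<or> g_rho G j = -1"
  shows "\<exists>c>g_a G j. {g_a G j<..c} \<subseteq> Ij G j"
proof (cases "j \<in> g_int G")
  case True
  then have "g_a G j < g_b G j"
    using wf_graphD(3)[OF assms(1)] by blast
  with True show ?thesis
    by (intro exI[of _ "(g_a G j + g_b G j) / 2"]) (auto simp: Ij_def)
qed (use assms in \<open>auto simp: Ij_def intro!: exI[of _ "g_a G j + 1"]\<close>)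

lemma Ij_right_end:
  assumes "wf_graph G" "j \<in> g_int G \<or> g_rho G j \<noteq> -1"
  shows "\<exists>c<g_b G j. {c..<g_b G j} \<subseteq> Ij G j"
proof (cases "j \<in> g_int G")
  case True
  then have "g_a G j < g_b G j"
    using wf_graphD(3)[OF assms(1)] by blast
  with True show ?thesis
    by (intro exI[of _ "(g_a G j + g_b G j) / 2"]) (auto simp: Ij_def)
qed (use assms in \<open>auto simp: Ij_def intro!: exI[of _ "g_b G j - 1"]\<close>)

lemma bl_bounded_linear:
  "(u \<longlongrightarrow> L) (at_right a) \<Longrightarrow> bounded_linear f \<Longrightarrow> bl a (\<lambda>t. f (u t)) = f (bl a u)"
  unfolding bl_def by (metis bounded_linear.tendsto tendsto_Lim trivial_limit_at_right_real)

lemma br_bounded_linear: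
  "(u \<longlongrightarrow> L) (at_left b) \<Longrightarrow> bounded_linear f \<Longrightarrow> br b (\<lambda>t. f (u t)) = f (br b u)"
  unfolding br_def by (metis bounded_linear.tendsto tendsto_Lim trivial_limit_at_left_real)

lemma boundary_values_bounded_linear:
  assumes wf: "wf_graph G" and u: "\<forall>j\<in>JJ G. \<exists>g. isderiv (Ij G j) (u j) g"
    and f: "bounded_linear f"
  shows "boundary_values G (\<lambda>j t. f (u j t)) = (\<lambda>k. f (boundary_values G u k))"
proof
  fix k
  show "boundary_values G (\<lambda>j t. f (u j t)) k = f (boundary_values G u k)"
  proof (cases "k < NN G")
    case True
    obtain j v where jv: "glabels G ! k = (j, v)" by fastforce
    obtain g where g: "isderiv (Ij G j) (u j) g"
      using u glabels_nth(1)[OF True jv] by blast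
    have "bl (g_a G j) (\<lambda>t. f (u j t)) = f (bl (g_a G j) (u j))"
      if "j \<in> g_int G \<or> g_rho G j = -1"
      using Ij_left_end[OF wf that] isderiv_tendsto_at_right[OF g Ij_in_sets_lebesgue]
        bl_bounded_linear[OF _ f] by blast
    moreover have "br (g_b G j) (\<lambda>t. f (u j t)) = f (br (g_b G j) (u j))"
      if "j \<in> g_int G \<or> g_rho G j \<noteq> -1"
      using Ij_right_end[OF wf that] isderiv_tendsto_at_left[OF g Ij_in_sets_lebesgue]
        br_bounded_linear[OF _ f] by blast
    ultimately show ?thesis
      using True jv by (auto simp: boundary_values_def bdry_def)
  qed (simp add: linear_simps(3)[OF f])
qed

section \<open>The conjugation C and the maximal operator\<close>

lemma Cop_Cop [simp]: "Cop (Cop Phi) = Phi"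
  unfolding Cop_def by simp

lemma fneg_fneg [simp]: "fneg (fneg Phi) = Phi"
  unfolding fneg_def by simp

lemma Cop_fneg: "Cop (fneg Phi) = fneg (Cop Phi)"
  unfolding Cop_def fneg_def by simp

lemma Cop_fsub: "Cop (fsub Phi Psi) = fsub (Cop Phi) (Cop Psi)"
  unfolding Cop_def fsub_def by simp

lemma fneg_fsub: "fneg (fsub Phi Psi) = fsub (fneg Phi) (fneg Psi)"
  unfolding fneg_def fsub_def by simp

lemma Cop_fscale: "Cop (fscale c Phi) = fscale (cnj c) (Cop Phi)"
  unfolding Cop_def fscale_def by simp

lemma fscale_uminus: "fscale (- c) Phi = fneg (fscale c Phi)"
  unfolding fscale_def fneg_def by simp

lemma Hsp_Cop: "Phi \<in> Hsp G \<Longrightarrow> Cop Phi \<in> Hsp G"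
  unfolding Hsp_def Cop_def by (auto intro: L2on_bounded_linear bounded_linear_cnj)

lemma Hsp_fneg: "Phi \<in> Hsp G \<Longrightarrow> fneg Phi \<in> Hsp G"
  unfolding Hsp_def fneg_def
  by (auto intro: L2on_bounded_linear bounded_linear_minus[OF bounded_linear_ident])

lemma nrm_Cop: "nrm G (Cop Phi) = nrm G Phi"
  unfolding nrm_def Cop_def by (simp add: add.commute)

lemma nrm_fneg: "nrm G (fneg Phi) = nrm G Phi"
  unfolding nrm_def fneg_def by simp

definition edgewise_deriv :: "('j,'v) mgraph \<Rightarrow> 'j fn \<Rightarrow> 'j fn \<Rightarrow> bool" where
  "edgewise_deriv G Phi Phi' \<longleftrightarrow> (\<forall>j\<in>JJ G.
      isderiv (Ij G j) (\<lambda>t. fst (Phi j t)) (\<lambda>t. fst (Phi' j t))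
    \<and> isderiv (Ij G j) (\<lambda>t. snd (Phi j t)) (\<lambda>t. snd (Phi' j t)))"

definition dirac :: "real \<Rightarrow> 'j fn \<Rightarrow> 'j fn \<Rightarrow> 'j fn" where
  "dirac m Phi Phi' = (\<lambda>j t. (- \<i> * snd (Phi' j t) + complex_of_real m * fst (Phi j t),
                              - \<i> * fst (Phi' j t) - complex_of_real m * snd (Phi j t)))"

lemma Dmax_iff:
  "(Phi, Psi) \<in> Dmax G m \<longleftrightarrow> Phi \<in> Hsp G \<and> Psi \<in> Hsp G
     \<and> (\<exists>Phi'. edgewise_deriv G Phi Phi' \<and> nrm G (fsub Psi (dirac m Phi Phi')) = 0)"
  unfolding Dmax_def edgewise_deriv_def dirac_def by auto

lemma edgewise_deriv_Cop: "edgewise_deriv G Phi Phi' \<Longrightarrow> edgewise_deriv G (Cop Phi) (Cop Phi')"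
  unfolding edgewise_deriv_def Cop_def
  by (auto intro: isderiv_bounded_linear[OF _ bounded_linear_cnj])

lemma edgewise_deriv_fneg: "edgewise_deriv G Phi Phi' \<Longrightarrow> edgewise_deriv G (fneg Phi) (fneg Phi')"
  unfolding edgewise_deriv_def fneg_def
  by (auto intro: isderiv_bounded_linear[OF _ bounded_linear_minus[OF bounded_linear_ident]])

lemma dirac_Cop: "dirac m (Cop Phi) (Cop Phi') = fneg (Cop (dirac m Phi Phi'))"
  unfolding dirac_def Cop_def fneg_def by (simp add: algebra_simps)

lemma dirac_fneg: "dirac m (fneg Phi) (fneg Phi') = fneg (dirac m Phi Phi')"
  unfolding dirac_def fneg_def by (simp add: algebra_simps)

lemma Dmax_Cop:
  assumes "(Phi, Psi) \<in> Dmax G m"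
  shows "(Cop Phi, fneg (Cop Psi)) \<in> Dmax G m"
proof -
  obtain Phi' where "Phi \<in> Hsp G" "Psi \<in> Hsp G" "edgewise_deriv G Phi Phi'"
    and "nrm G (fsub Psi (dirac m Phi Phi')) = 0"
    using assms unfolding Dmax_iff by blast
  moreover have "fsub (fneg (Cop Psi)) (dirac m (Cop Phi) (Cop Phi'))
      = fneg (Cop (fsub Psi (dirac m Phi Phi')))"
    by (simp add: dirac_Cop Cop_fsub fneg_fsub)
  ultimately show ?thesis
    unfolding Dmax_iff by (metis Hsp_Cop Hsp_fneg edgewise_deriv_Cop nrm_Cop nrm_fneg)
qed

lemma Dmax_fneg:
  assumes "(Phi, Psi) \<in> Dmax G m"
  shows "(fneg Phi, fneg Psi) \<in> Dmax G m"
proof -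
  obtain Phi' where "Phi \<in> Hsp G" "Psi \<in> Hsp G" "edgewise_deriv G Phi Phi'"
    and "nrm G (fsub Psi (dirac m Phi Phi')) = 0"
    using assms unfolding Dmax_iff by blast
  moreover have "fsub (fneg Psi) (dirac m (fneg Phi) (fneg Phi'))
      = fneg (fsub Psi (dirac m Phi Phi'))"
    by (simp add: dirac_fneg fneg_fsub)
  ultimately show ?thesis
    unfolding Dmax_iff by (metis Hsp_fneg edgewise_deriv_fneg nrm_fneg)
qed

lemma Dmax_Cop_iff: "(Cop Phi, fneg (Cop Psi)) \<in> Dmax G m \<longleftrightarrow> (Phi, Psi) \<in> Dmax G m"
  using Dmax_Cop[of Phi Psi] Dmax_Cop[of "Cop Phi" "fneg (Cop Psi)"] by (auto simp: Cop_fneg)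

lemma Dmax_weakly_differentiable:
  assumes "(Phi, Psi) \<in> Dmax G m"
  shows "\<forall>j\<in>JJ G. \<exists>g. isderiv (Ij G j) (\<lambda>t. fst (Phi j t)) g"
    and "\<forall>j\<in>JJ G. \<exists>g. isderiv (Ij G j) (\<lambda>t. snd (Phi j t)) g"
  using assms unfolding Dmax_def by blast+

lemma L2on_dirac:
  assumes "L2on S u" "L2on S v" "L2on S u'" "L2on S v'"
  shows "L2on S (\<lambda>t. - \<i> * v' t + complex_of_real m * u t)"
    and "L2on S (\<lambda>t. - \<i> * u' t - complex_of_real m * v t)"
  by (intro L2on_add L2on_diff L2on_bounded_linear[OF _ bounded_linear_mult_right] assms)+

lemma Dmax_if_edgewise_deriv:
  assumes "edgewise_deriv G Phi Phi'"
  shows "(Phi, dirac m Phi Phi') \<in> Dmax G m"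
proof -
  have L2: "L2on (Ij G j) (\<lambda>t. f (Phi j t))" "L2on (Ij G j) (\<lambda>t. f (Phi' j t))"
    if "j \<in> JJ G" "f = fst \<or> f = snd" for j f
    using assms that unfolding edgewise_deriv_def isderiv_def by auto
  then have "Phi \<in> Hsp G"
    unfolding Hsp_def by blast
  moreover have "dirac m Phi Phi' \<in> Hsp G"
    unfolding Hsp_def
  proof (intro CollectI ballI conjI)
    fix j assume "j \<in> JJ G"
    show "L2on (Ij G j) (\<lambda>t. fst (dirac m Phi Phi' j t))"
      unfolding dirac_def fst_conv by (rule L2on_dirac) (use L2 \<open>j \<in> JJ G\<close> in blast)+
    show "L2on (Ij G j) (\<lambda>t. snd (dirac m Phi Phi' j t))"
      unfolding dirac_def snd_conv by (rule L2on_dirac) (use L2 \<open>j \<in> JJ G\<close> in blast)+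
  qed
  moreover have "nrm G (fsub (dirac m Phi Phi') (dirac m Phi Phi')) = 0"
    unfolding nrm_def fsub_def by simp
  ultimately show ?thesis
    unfolding Dmax_iff using assms by blast
qed

lemma gam1_Cop:
  assumes "wf_graph G" "(Phi, Psi) \<in> Dmax G m"
  shows "gam1 G (Cop Phi) = VC G (gam2 G Phi)"
proof -
  have "gam1 G (Cop Phi) = (\<lambda>k. cnj (boundary_values G (\<lambda>j t. snd (Phi j t)) k))"
    unfolding gam1_eq_boundary_values Cop_def
    using boundary_values_bounded_linear[OF assms(1) Dmax_weakly_differentiable(2)[OF assms(2)]
        bounded_linear_cnj] by simp
  then show ?thesis
    using Vt_diag_unimodular[OF assms(1)]
    by (auto intro!: ext simp: VC_apply gam2_eq_boundary_values mult.assoc[symmetric])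
qed

lemma gam2_Cop:
  assumes "wf_graph G" "(Phi, Psi) \<in> Dmax G m"
  shows "gam2 G (Cop Phi) = VC G (gam1 G Phi)"
  unfolding gam2_eq_boundary_values gam1_eq_boundary_values Cop_def
  using boundary_values_bounded_linear[OF assms(1) Dmax_weakly_differentiable(1)[OF assms(2)]
      bounded_linear_cnj]
  by (auto intro!: ext simp: VC_apply)

lemma gam1_fneg:
  assumes "wf_graph G" "(Phi, Psi) \<in> Dmax G m"
  shows "gam1 G (fneg Phi) = - gam1 G Phi"
  unfolding gam1_eq_boundary_values fneg_def
  using boundary_values_bounded_linear[OF assms(1) Dmax_weakly_differentiable(1)[OF assms(2)]
      bounded_linear_minus[OF bounded_linear_ident]]
  by (auto intro!: ext)

lemma gam2_fneg:
  assumes "wf_graph G" "(Phi, Psi) \<in> Dmax G m"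
  shows "gam2 G (fneg Phi) = - gam2 G Phi"
  unfolding gam2_eq_boundary_values fneg_def
  using boundary_values_bounded_linear[OF assms(1) Dmax_weakly_differentiable(2)[OF assms(2)]
      bounded_linear_minus[OF bounded_linear_ident]]
  by (auto intro!: ext)

section \<open>Spectral transport under D \<mapsto> - C D C\<close>

definition neg_conj :: "('j fn \<times> 'j fn) set \<Rightarrow> ('j fn \<times> 'j fn) set" where
  "neg_conj D = {(Cop Phi, fneg (Cop Psi)) | Phi Psi. (Phi, Psi) \<in> D}"

definition neg_closed :: "('j fn \<times> 'j fn) set \<Rightarrow> bool" where
  "neg_closed D \<longleftrightarrow> (\<forall>Phi Psi. (Phi, Psi) \<in> D \<longrightarrow> (fneg Phi, fneg Psi) \<in> D)"

lemma mem_neg_conj: "(Phi, Psi) \<in> neg_conj D \<longleftrightarrow> (Cop Phi, fneg (Cop Psi)) \<in> D"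
  unfolding neg_conj_def by (force simp: Cop_fneg)

lemma neg_conj_neg_conj [simp]: "neg_conj (neg_conj D) = D"
  by (auto simp: mem_neg_conj Cop_fneg)

lemma neg_closed_neg_conj: "neg_closed D \<Longrightarrow> neg_closed (neg_conj D)"
  unfolding neg_closed_def mem_neg_conj Cop_fneg by (metis fneg_fneg)

lemma Csym_iff_neg_conj: "Csym D \<longleftrightarrow> D = neg_conj D"
proof -
  have "Csym D \<longleftrightarrow> (\<forall>Phi Psi. (Phi, fneg (Cop Psi)) \<in> neg_conj D \<longleftrightarrow> (Phi, fneg (Cop Psi)) \<in> D)"
    unfolding Csym_def mem_neg_conj by (simp add: Cop_fneg)
  also have "\<dots> \<longleftrightarrow> (\<forall>Phi Psi. (Phi, Psi) \<in> neg_conj D \<longleftrightarrow> (Phi, Psi) \<in> D)"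
    by (metis Cop_Cop Cop_fneg fneg_fneg)
  finally show ?thesis
    by auto
qed

lemma residual_neg_conj:
  "fsub (fneg (Cop Psi)) (fscale (- cnj lam) (Cop Phi)) = fneg (Cop (fsub Psi (fscale lam Phi)))"
  by (simp add: Cop_fsub fneg_fsub Cop_fscale fscale_uminus)

locale conj_invariant =
  fixes H :: "'j fn set" and nn :: "'j fn \<Rightarrow> real"
  assumes Cop_mem: "Phi \<in> H \<Longrightarrow> Cop Phi \<in> H"
    and fneg_mem: "Phi \<in> H \<Longrightarrow> fneg Phi \<in> H"
    and nn_Cop [simp]: "nn (Cop Phi) = nn Phi"
    and nn_fneg [simp]: "nn (fneg Phi) = nn Phi"
begin

lemma nn_residual_neg_conj [simp]:
  "nn (fsub (fneg (Cop Psi)) (fscale (- cnj lam) (Cop Phi))) = nn (fsub Psi (fscale lam Phi))"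
  by (simp add: residual_neg_conj)

lemma nn_fsub_neg_conj: "nn (fsub g (fneg (Cop R))) = nn (fsub (fneg (Cop g)) R)"
proof -
  have "fsub g (fneg (Cop R)) = fneg (Cop (fsub (fneg (Cop g)) R))"
    by (simp add: Cop_fsub fneg_fsub Cop_fneg)
  then show ?thesis by simp
qed

lemma in_resolvent_neg_conj:
  assumes "in_resolvent H nn D lam"
  shows "in_resolvent H nn (neg_conj D) (- cnj lam)"
proof -
  obtain c where inj: "\<forall>(Phi, Psi)\<in>D. nn (fsub Psi (fscale lam Phi)) = 0 \<longrightarrow> nn Phi = 0"
    and onto: "\<forall>g\<in>H. \<exists>(Phi, Psi)\<in>D. nn (fsub g (fsub Psi (fscale lam Phi))) = 0"
    and bound: "\<forall>(Phi, Psi)\<in>D. nn Phi \<le> c * nn (fsub Psi (fscale lam Phi))"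
    using assms unfolding in_resolvent_def by blast
  have "\<exists>(Phi, Psi)\<in>neg_conj D. nn (fsub g (fsub Psi (fscale (- cnj lam) Phi))) = 0"
    if "g \<in> H" for g
  proof -
    obtain Phi Psi where "(Phi, Psi) \<in> D" "nn (fsub (fneg (Cop g)) (fsub Psi (fscale lam Phi))) = 0"
      using onto Cop_mem fneg_mem \<open>g \<in> H\<close> by blast
    then show ?thesis
      by (intro bexI[of _ "(Cop Phi, fneg (Cop Psi))"])
        (simp_all add: residual_neg_conj nn_fsub_neg_conj mem_neg_conj Cop_fneg)
  qed
  moreover have "nn (fsub (fneg (Cop Psi)) (fscale lam (Cop Phi)))
      = nn (fsub Psi (fscale (- cnj lam) Phi))" for Phi Psi
    using nn_residual_neg_conj[of Psi "- cnj lam" Phi] by simp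
  then have "\<forall>(Phi, Psi)\<in>neg_conj D. nn (fsub Psi (fscale (- cnj lam) Phi)) = 0 \<longrightarrow> nn Phi = 0"
    and "\<forall>(Phi, Psi)\<in>neg_conj D. nn Phi \<le> c * nn (fsub Psi (fscale (- cnj lam) Phi))"
    using inj bound by (fastforce simp: mem_neg_conj)+
  ultimately show ?thesis
    unfolding in_resolvent_def by blast
qed

lemma spec_p_neg_conj:
  assumes "lam \<in> spec_p H nn D"
  shows "- cnj lam \<in> spec_p H nn (neg_conj D)"
proof -
  obtain Phi Psi where "(Phi, Psi) \<in> D" "nn Phi \<noteq> 0" "nn (fsub Psi (fscale lam Phi)) = 0"
    using assms unfolding spec_p_def by blast
  then show ?thesis
    unfolding spec_p_def
    by (intro CollectI bexI[of _ "(Cop Phi, fneg (Cop Psi))"]) (simp_all add: mem_neg_conj Cop_fneg)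
qed

lemma dense_range_neg_conj:
  assumes "dense_range H nn D lam"
  shows "dense_range H nn (neg_conj D) (- cnj lam)"
  unfolding dense_range_def
proof (intro ballI allI impI)
  fix g and e :: real assume "g \<in> H" "e > 0"
  then obtain Phi Psi where "(Phi, Psi) \<in> D"
    "nn (fsub (fneg (Cop g)) (fsub Psi (fscale lam Phi))) < e"
    using assms Cop_mem fneg_mem unfolding dense_range_def by blast
  then show "\<exists>(Phi, Psi)\<in>neg_conj D. nn (fsub g (fsub Psi (fscale (- cnj lam) Phi))) < e"
    by (intro bexI[of _ "(Cop Phi, fneg (Cop Psi))"])
      (simp_all add: residual_neg_conj nn_fsub_neg_conj mem_neg_conj Cop_fneg)
qed

text \<open>Since (D' - mu) C = - C (D - lam) for D' = - C D C and mu = - cnj lam, the Jordan chain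
  of C Phi carries alternating signs; closedness under negation stands in for linearity of D'.\<close>

lemma gen_eig_neg_conj:
  assumes "neg_closed (neg_conj D)" "Phi \<in> gen_eig H nn D lam"
  shows "Cop Phi \<in> gen_eig H nn (neg_conj D) (- cnj lam)"
proof -
  obtain k Phis Psis where chain: "Phis 0 = Phi" "\<forall>n\<le>k. Phis n \<in> H"
    "\<forall>n<k. (Phis n, Psis n) \<in> D
       \<and> nn (fsub (fsub (Psis n) (fscale lam (Phis n))) (Phis (Suc n))) = 0"
    "nn (Phis k) = 0"
    using assms(2) unfolding gen_eig_def by blast
  define Phis' where "Phis' n = (if even n then Cop (Phis n) else fneg (Cop (Phis n)))" for n
  define Psis' where "Psis' n = (if even n then fneg (Cop (Psis n)) else Cop (Psis n))" for n
  have "(Phis' n, Psis' n) \<in> neg_conj D" if "n < k" for n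
  proof -
    have "(Cop (Phis n), fneg (Cop (Psis n))) \<in> neg_conj D"
      using chain(3) that by (simp add: mem_neg_conj Cop_fneg)
    then have "(fneg (Cop (Phis n)), Cop (Psis n)) \<in> neg_conj D"
      using assms(1) unfolding neg_closed_def by (metis fneg_fneg)
    with \<open>(Cop (Phis n), fneg (Cop (Psis n))) \<in> neg_conj D\<close> show ?thesis
      by (simp add: Phis'_def Psis'_def)
  qed
  moreover have "fsub (fsub (Psis' n) (fscale (- cnj lam) (Phis' n))) (Phis' (Suc n))
      = (if even n then fneg (Cop R) else Cop R)"
    if "R = fsub (fsub (Psis n) (fscale lam (Phis n))) (Phis (Suc n))" for n R
    unfolding that Phis'_def Psis'_def fsub_def fneg_def Cop_def fscale_def
    by (auto intro!: ext simp: algebra_simps)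
  ultimately have "\<forall>n<k. (Phis' n, Psis' n) \<in> neg_conj D
      \<and> nn (fsub (fsub (Psis' n) (fscale (- cnj lam) (Phis' n))) (Phis' (Suc n))) = 0"
    using chain(3) by simp
  moreover have "Phis' 0 = Cop Phi" "\<forall>n\<le>k. Phis' n \<in> H" "nn (Phis' k) = 0"
    using chain(1,2,4) by (simp_all add: Phis'_def Cop_mem fneg_mem)
  ultimately show ?thesis
    unfolding gen_eig_def by blast
qed

lemma fin_alg_mult_neg_conj:
  assumes "neg_closed D" "fin_alg_mult H nn D lam"
  shows "fin_alg_mult H nn (neg_conj D) (- cnj lam)"
proof -
  obtain fs where fs: "set fs \<subseteq> H"
    "\<forall>Phi\<in>gen_eig H nn D lam. \<exists>c. nn (fsub Phi (lincomb fs c)) = 0"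
    using assms(2) unfolding fin_alg_mult_def by blast
  have "\<exists>c. nn (fsub Phi (lincomb (map Cop fs) c)) = 0"
    if "Phi \<in> gen_eig H nn (neg_conj D) (- cnj lam)" for Phi
  proof -
    have "Cop Phi \<in> gen_eig H nn D lam"
      using gen_eig_neg_conj[of "neg_conj D" Phi "- cnj lam"] assms(1) that by simp
    then obtain c where "nn (fsub (Cop Phi) (lincomb fs c)) = 0"
      using fs(2) by blast
    moreover have "Cop (fsub (Cop Phi) (lincomb fs c))
        = fsub Phi (lincomb (map Cop fs) (\<lambda>k. cnj (c k)))"
      unfolding fsub_def Cop_def lincomb_def by (auto intro!: ext sum.cong)
    ultimately show ?thesis
      by (metis nn_Cop)
  qed
  moreover have "set (map Cop fs) \<subseteq> H"
    using fs(1) Cop_mem by auto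
  ultimately show ?thesis
    unfolding fin_alg_mult_def by blast
qed

lemma in_resolvent_neg_conj_iff:
  "in_resolvent H nn D lam \<longleftrightarrow> in_resolvent H nn (neg_conj D) (- cnj lam)"
  using in_resolvent_neg_conj[of D lam] in_resolvent_neg_conj[of "neg_conj D" "- cnj lam"] by auto

lemma spec_neg_conj_iff: "lam \<in> spec H nn D \<longleftrightarrow> - cnj lam \<in> spec H nn (neg_conj D)"
  unfolding spec_def using in_resolvent_neg_conj_iff[of D lam] by blast

lemma spec_p_neg_conj_iff: "lam \<in> spec_p H nn D \<longleftrightarrow> - cnj lam \<in> spec_p H nn (neg_conj D)"
  using spec_p_neg_conj[of lam D] spec_p_neg_conj[of "- cnj lam" "neg_conj D"] by auto

lemma dense_range_neg_conj_iff:
  "dense_range H nn D lam \<longleftrightarrow> dense_range H nn (neg_conj D) (- cnj lam)"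
  using dense_range_neg_conj[of D lam] dense_range_neg_conj[of "neg_conj D" "- cnj lam"] by auto

lemma spec_c_neg_conj_iff: "lam \<in> spec_c H nn D \<longleftrightarrow> - cnj lam \<in> spec_c H nn (neg_conj D)"
  unfolding spec_c_def using spec_neg_conj_iff spec_p_neg_conj_iff dense_range_neg_conj_iff by blast

lemma spec_r_neg_conj_iff: "lam \<in> spec_r H nn D \<longleftrightarrow> - cnj lam \<in> spec_r H nn (neg_conj D)"
  unfolding spec_r_def using spec_neg_conj_iff spec_p_neg_conj_iff dense_range_neg_conj_iff by blast

lemma isolated_in_spec_neg_conj:
  assumes "e > 0" "\<forall>mu\<in>spec H nn D. mu \<noteq> lam \<longrightarrow> e \<le> cmod (mu - lam)"
  shows "\<forall>mu\<in>spec H nn (neg_conj D). mu \<noteq> - cnj lam \<longrightarrow> e \<le> cmod (mu - - cnj lam)"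
proof (intro ballI impI)
  fix mu assume "mu \<in> spec H nn (neg_conj D)" "mu \<noteq> - cnj lam"
  then have "- cnj mu \<in> spec H nn D" "- cnj mu \<noteq> lam"
    using spec_neg_conj_iff[of "- cnj mu" D] by auto
  then have "e \<le> cmod (- cnj mu - lam)"
    using assms(2) by blast
  also have "- cnj mu - lam = - cnj (mu - - cnj lam)"
    by simp
  finally show "e \<le> cmod (mu - - cnj lam)"
    by (metis complex_mod_cnj norm_minus_cancel)
qed

lemma spec_d_neg_conj:
  assumes "neg_closed D" "lam \<in> spec_d H nn D"
  shows "- cnj lam \<in> spec_d H nn (neg_conj D)"
  using assms spec_p_neg_conj fin_alg_mult_neg_conj isolated_in_spec_neg_conj
  unfolding spec_d_def by blast

lemma spec_d_neg_conj_iff: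
  assumes "neg_closed D"
  shows "lam \<in> spec_d H nn D \<longleftrightarrow> - cnj lam \<in> spec_d H nn (neg_conj D)"
  using spec_d_neg_conj[OF assms, of lam]
    spec_d_neg_conj[OF neg_closed_neg_conj[OF assms], of "- cnj lam"] by auto

lemma spec_ess_neg_conj_iff:
  assumes "neg_closed D"
  shows "lam \<in> spec_ess H nn D \<longleftrightarrow> - cnj lam \<in> spec_ess H nn (neg_conj D)"
  unfolding spec_ess_def using spec_neg_conj_iff spec_d_neg_conj_iff[OF assms] by blast

lemma spec_symmetric_if_Csym: "Csym D \<Longrightarrow> lam \<in> spec H nn D \<longleftrightarrow> - cnj lam \<in> spec H nn D"
  using spec_neg_conj_iff Csym_iff_neg_conj by metis

end

interpretation Hsp: conj_invariant "Hsp G" "nrm G"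
  by unfold_locales (simp_all add: Hsp_Cop Hsp_fneg nrm_Cop nrm_fneg)

definition conj_rel :: "('j,'v) mgraph \<Rightarrow> (cvec \<times> cvec) set \<Rightarrow> (cvec \<times> cvec) set" where
  "conj_rel G Th = {(VC G y, VC G x) | x y. (x, y) \<in> Th}"

lemma mem_conj_rel:
  assumes "wf_graph G" "Th \<subseteq> vecs (NN G) \<times> vecs (NN G)" "x \<in> vecs (NN G)" "y \<in> vecs (NN G)"
  shows "(x, y) \<in> conj_rel G Th \<longleftrightarrow> (VC G y, VC G x) \<in> Th"
proof
  assume "(x, y) \<in> conj_rel G Th"
  then obtain x' y' where "(x', y') \<in> Th" "x = VC G y'" "y = VC G x'"
    unfolding conj_rel_def by blast
  moreover have "x' \<in> vecs (NN G)" "y' \<in> vecs (NN G)"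
    using assms(2) \<open>(x', y') \<in> Th\<close> by auto
  ultimately show "(VC G y, VC G x) \<in> Th"
    using VC_VC[OF assms(1)] by simp
next
  assume "(VC G y, VC G x) \<in> Th"
  then show "(x, y) \<in> conj_rel G Th"
    unfolding conj_rel_def using VC_VC[OF assms(1)] assms(3,4) by force
qed

lemma gam1_in_vecs: "gam1 G Phi \<in> vecs (NN G)"
  and gam2_in_vecs: "gam2 G Phi \<in> vecs (NN G)"
  unfolding gam1_def gam2_def vecs_def by auto

lemma DTheta_conj_rel:
  assumes "wf_graph G" "Th \<subseteq> vecs (NN G) \<times> vecs (NN G)"
  shows "DTheta G m (conj_rel G Th) = neg_conj (DTheta G m Th)"
proof (intro set_eqI, clarify)
  fix Phi Psi
  have "(Phi, Psi) \<in> DTheta G m (conj_rel G Th) \<longleftrightarrow>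
      (Phi, Psi) \<in> Dmax G m \<and> (VC G (gam2 G Phi), VC G (gam1 G Phi)) \<in> Th"
    unfolding DTheta_def using mem_conj_rel[OF assms gam1_in_vecs gam2_in_vecs] by auto
  also have "\<dots> \<longleftrightarrow> (Cop Phi, fneg (Cop Psi)) \<in> DTheta G m Th"
    unfolding DTheta_def using gam1_Cop[OF assms(1)] gam2_Cop[OF assms(1)]
    by (auto simp: Dmax_Cop_iff)
  finally show "(Phi, Psi) \<in> DTheta G m (conj_rel G Th) \<longleftrightarrow> (Phi, Psi) \<in> neg_conj (DTheta G m Th)"
    by (simp add: mem_neg_conj)
qed

lemma LamC_eq_conj_rel:
  assumes "wf_graph G" "lin_rel (NN G) Lam"
  shows "LamC G Lam = conj_rel G (LamW G Lam)"
proof (intro equalityI subsetI)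
  fix p assume "p \<in> LamC G Lam"
  then obtain f f' where p: "p = (VC G (mv (NN G) (Winv G) f'), VC G (mv (NN G) (Winv G) f))"
    and "(f, f') \<in> Lam"
    unfolding LamC_def by blast
  moreover have "f \<in> vecs (NN G)" "f' \<in> vecs (NN G)"
    using assms(2) \<open>(f, f') \<in> Lam\<close> unfolding lin_rel_def by auto
  ultimately have "(mv (NN G) (Winv G) f, mv (NN G) (Winv G) f') \<in> LamW G Lam"
    unfolding LamW_def by (simp add: W_Winv_apply[OF assms(1)])
  then show "p \<in> conj_rel G (LamW G Lam)"
    unfolding p conj_rel_def by blast
next
  fix p assume "p \<in> conj_rel G (LamW G Lam)"
  then obtain x y where p: "p = (VC G y, VC G x)" and "(x, y) \<in> LamW G Lam"
    unfolding conj_rel_def by blast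
  then have "(mv (NN G) (Wm G) x, mv (NN G) (Wm G) y) \<in> Lam"
    and "mv (NN G) (Winv G) (mv (NN G) (Wm G) x) = x" "mv (NN G) (Winv G) (mv (NN G) (Wm G) y) = y"
    unfolding LamW_def by (auto simp: Winv_W_apply[OF assms(1)])
  then show "p \<in> LamC G Lam"
    unfolding p LamC_def
    by (intro CollectI exI[of _ "mv (NN G) (Wm G) x"] exI[of _ "mv (NN G) (Wm G) y"]) simp
qed

lemma neg_closed_DTheta_LamW:
  assumes "wf_graph G" "lin_rel (NN G) Lam"
  shows "neg_closed (DTheta G m (LamW G Lam))"
  unfolding neg_closed_def
proof (intro allI impI)
  fix Phi Psi assume "(Phi, Psi) \<in> DTheta G m (LamW G Lam)"
  then have D: "(Phi, Psi) \<in> Dmax G m" and "(gam1 G Phi, gam2 G Phi) \<in> LamW G Lam"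
    unfolding DTheta_def by auto
  then have "((\<lambda>k. -1 * mv (NN G) (Wm G) (gam1 G Phi) k),
      (\<lambda>k. -1 * mv (NN G) (Wm G) (gam2 G Phi) k)) \<in> Lam"
    using assms(2) unfolding LamW_def lin_rel_def by blast
  moreover have "(\<lambda>k. -1 * mv n M x k) = mv n M (- x)" for n M x
    unfolding mv_def by (auto intro!: ext simp: sum_negf)
  ultimately have "(- gam1 G Phi, - gam2 G Phi) \<in> LamW G Lam"
    using gam1_in_vecs[of G Phi] gam2_in_vecs[of G Phi] unfolding LamW_def by (simp add: vecs_def)
  then show "(fneg Phi, fneg Psi) \<in> DTheta G m (LamW G Lam)"
    using Dmax_fneg[OF D] gam1_fneg[OF assms(1) D] gam2_fneg[OF assms(1) D]
    unfolding DTheta_def by simp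
qed

section \<open>Surjectivity of the boundary map\<close>

lemma L2on_continuous_on_Icc:
  assumes "a < b" "continuous_on {a..b} u"
  shows "L2on {a<..<b} u"
proof -
  have "u \<in> borel_measurable (lebesgue_on {a<..<b})"
    using assms by (intro continuous_imp_measurable_on_sets_lebesgue)
      (auto intro: continuous_on_subset)
  moreover have "continuous_on {a..b} (\<lambda>t. (cmod (u t))\<^sup>2)"
    using assms(2) by (intro continuous_intros)
  then have "set_integrable lebesgue {a..b} (\<lambda>t. (cmod (u t))\<^sup>2)"
    using absolutely_integrable_continuous_real by blast
  then have "set_integrable lebesgue {a<..<b} (\<lambda>t. (cmod (u t))\<^sup>2)"
    by (rule set_integrable_subset) auto
  then have "integrable (lebesgue_on {a<..<b}) (\<lambda>t. (cmod (u t))\<^sup>2)"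
    by (intro absolutely_integrable_imp_integrable) auto
  ultimately show ?thesis
    unfolding L2on_def by blast
qed

lemma exp_minus_2_absolutely_integrable:
  "(\<lambda>t. exp (- 2 * t)) absolutely_integrable_on {(a::real)<..}"
proof -
  have "(\<lambda>t. exp (- 2 * t)) absolutely_integrable_on {a..}"
    using integrable_on_exp_minus_to_infinity[of 2 a]
    by (subst absolutely_integrable_on_iff_nonneg) auto
  then show ?thesis
    by (rule set_integrable_subset) auto
qed

lemma L2on_exp_decay_right: "L2on {a<..} (\<lambda>t. complex_of_real (exp (a - t)))"
proof -
  have "integrable (lebesgue_on {a<..}) (\<lambda>t. exp (2 * a) * exp (- 2 * t))"
    by (intro integrable_mult_right absolutely_integrable_imp_integrable
        exp_minus_2_absolutely_integrable) auto
  moreover have "(\<lambda>t. (cmod (complex_of_real (exp (a - t))))\<^sup>2) = (\<lambda>t. exp (2 * a) * exp (- 2 * t))"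
    by (rule ext) (simp add: power2_eq_square flip: exp_add)
  ultimately show ?thesis
    unfolding L2on_def
    by (auto intro!: continuous_imp_measurable_on_sets_lebesgue continuous_intros)
qed

lemma L2on_exp_decay_left: "L2on {..<b} (\<lambda>t. complex_of_real (exp (t - b)))"
proof -
  have "(\<lambda>t. exp (- 2 * - t)) absolutely_integrable_on {..<b}"
    using has_absolute_integral_reflect_real[of "{..<b}" "{-b<..}" "\<lambda>t. exp (- 2 * t)"]
      exp_minus_2_absolutely_integrable[of "- b"] by (force simp: image_def)
  then have "integrable (lebesgue_on {..<b}) (\<lambda>t. exp (- 2 * b) * exp (2 * t))"
    by (intro integrable_mult_right absolutely_integrable_imp_integrable) auto
  moreover have "(\<lambda>t. (cmod (complex_of_real (exp (t - b))))\<^sup>2) = (\<lambda>t. exp (- 2 * b) * exp (2 * t))"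
    by (rule ext) (simp add: power2_eq_square flip: exp_add)
  ultimately show ?thesis
    unfolding L2on_def
    by (auto intro!: continuous_imp_measurable_on_sets_lebesgue continuous_intros)
qed

lemma isderiv_if_has_vector_derivative:
  assumes "L2on S u" "L2on S g" "\<And>t. t \<in> S \<Longrightarrow> (u has_vector_derivative g t) (at t)"
    and "\<And>x y. x \<in> S \<Longrightarrow> y \<in> S \<Longrightarrow> {x..y} \<subseteq> S"
  shows "isderiv S u g"
  unfolding isderiv_def
proof (intro conjI ballI impI assms(1,2))
  fix x y assume "x \<in> S" "y \<in> S" "x \<le> y"
  then have "(u has_vector_derivative g t) (at t within {x..y})" if "t \<in> {x..y}" for t
    using assms(3,4) that by (blast intro: has_vector_derivative_at_within)
  then show "(g has_integral u y - u x) {x..y}"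
    using \<open>x \<le> y\<close> by (intro fundamental_theorem_of_calculus) auto
qed

definition edge_profile :: "('j,'v) mgraph \<Rightarrow> 'j \<Rightarrow> complex \<Rightarrow> complex \<Rightarrow> real \<Rightarrow> complex" where
  "edge_profile G j p q t =
     (if j \<in> g_int G then p + (q - p) * of_real ((t - g_a G j) / (g_b G j - g_a G j))
      else if g_rho G j = -1 then p * of_real (exp (g_a G j - t))
      else p * of_real (exp (t - g_b G j)))"

definition edge_profile' :: "('j,'v) mgraph \<Rightarrow> 'j \<Rightarrow> complex \<Rightarrow> complex \<Rightarrow> real \<Rightarrow> complex" where
  "edge_profile' G j p q t =
     (if j \<in> g_int G then (q - p) * of_real (1 / (g_b G j - g_a G j))
      else if g_rho G j = -1 then - p * of_real (exp (g_a G j - t))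
      else p * of_real (exp (t - g_b G j)))"

lemma edge_profile_has_vector_derivative:
  "(edge_profile G j p q has_vector_derivative edge_profile' G j p q t) (at t)"
proof -
  have "((\<lambda>t. of_real ((t - g_a G j) / (g_b G j - g_a G j)) :: complex)
      has_vector_derivative of_real (1 / (g_b G j - g_a G j))) (at t)"
    by (intro has_vector_derivative_of_real DERIV_cdivide[where D = 1])
      (auto intro!: derivative_eq_intros)
  moreover have "((\<lambda>t. of_real (exp (g_a G j - t)) :: complex)
      has_vector_derivative - of_real (exp (g_a G j - t))) (at t)"
    using has_vector_derivative_of_real[of "\<lambda>t. exp (g_a G j - t)" "- exp (g_a G j - t)"]
    by (auto intro!: derivative_eq_intros)
  moreover have "((\<lambda>t. of_real (exp (t - g_b G j)) :: complex)
      has_vector_derivative of_real (exp (t - g_b G j))) (at t)"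
    by (intro has_vector_derivative_of_real) (auto intro!: derivative_eq_intros)
  ultimately show ?thesis
    unfolding edge_profile_def[abs_def] edge_profile'_def
    by (auto intro!: derivative_eq_intros has_vector_derivative_mult_right)
qed

lemma edge_profile_L2on:
  assumes "wf_graph G"
  shows "L2on (Ij G j) (edge_profile G j p q)" "L2on (Ij G j) (edge_profile' G j p q)"
proof -
  let ?a = "g_a G j" and ?b = "g_b G j"
  have "L2on (Ij G j) (edge_profile G j p q) \<and> L2on (Ij G j) (edge_profile' G j p q)"
  proof (cases "j \<in> g_int G")
    case True
    then have "?a < ?b"
      using wf_graphD(3)[OF assms] by blast
    moreover have "continuous_on {?a..?b} (edge_profile G j p q)"
      "continuous_on {?a..?b} (edge_profile' G j p q)"
      using True \<open>?a < ?b\<close> unfolding edge_profile_def edge_profile'_def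
      by (auto intro!: continuous_intros)
    ultimately show ?thesis
      using True L2on_continuous_on_Icc by (simp add: Ij_def)
  next
    case False
    have exp_right: "L2on {?a<..} (\<lambda>t. c * complex_of_real (exp (?a - t)))" for c
      by (rule L2on_bounded_linear[OF L2on_exp_decay_right bounded_linear_mult_right])
    have exp_left: "L2on {..<?b} (\<lambda>t. c * complex_of_real (exp (t - ?b)))" for c
      by (rule L2on_bounded_linear[OF L2on_exp_decay_left bounded_linear_mult_right])
    show ?thesis
      using False exp_right[of p] exp_right[of "- p"] exp_left[of p]
      unfolding edge_profile_def[abs_def] edge_profile'_def[abs_def] by (simp add: Ij_def)
  qed
  then show "L2on (Ij G j) (edge_profile G j p q)" "L2on (Ij G j) (edge_profile' G j p q)"
    by auto
qed

lemma edge_profile_isderiv: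
  "wf_graph G \<Longrightarrow> isderiv (Ij G j) (edge_profile G j p q) (edge_profile' G j p q)"
  by (intro isderiv_if_has_vector_derivative edge_profile_L2on edge_profile_has_vector_derivative)
    (auto simp: Ij_def split: if_splits)

lemma bl_edge_profile:
  assumes "j \<in> g_int G \<or> g_rho G j = -1"
  shows "bl (g_a G j) (edge_profile G j p q) = p"
proof -
  have "continuous_on UNIV (edge_profile G j p q)"
    using edge_profile_has_vector_derivative
    by (meson continuous_at_imp_continuous_on has_vector_derivative_continuous)
  then have "(edge_profile G j p q \<longlongrightarrow> edge_profile G j p q (g_a G j)) (at_right (g_a G j))"
    by (simp add: continuous_on_def filterlim_at_split)
  moreover have "edge_profile G j p q (g_a G j) = p"
    using assms by (auto simp: edge_profile_def)
  ultimately show ?thesis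
    unfolding bl_def by (simp add: tendsto_Lim)
qed

lemma br_edge_profile:
  assumes "wf_graph G" "j \<in> g_int G \<or> g_rho G j \<noteq> -1"
  shows "br (g_b G j) (edge_profile G j p q) = (if j \<in> g_int G then q else p)"
proof -
  have "continuous_on UNIV (edge_profile G j p q)"
    using edge_profile_has_vector_derivative
    by (meson continuous_at_imp_continuous_on has_vector_derivative_continuous)
  then have "(edge_profile G j p q \<longlongrightarrow> edge_profile G j p q (g_b G j)) (at_left (g_b G j))"
    by (simp add: continuous_on_def filterlim_at_split)
  moreover have "g_a G j < g_b G j" if "j \<in> g_int G"
    using wf_graphD(3)[OF assms(1) that] by blast
  then have "edge_profile G j p q (g_b G j) = (if j \<in> g_int G then q else p)"
    using assms(2) by (auto simp: edge_profile_def)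
  ultimately show ?thesis
    unfolding br_def by (simp add: tendsto_Lim)
qed

definition label_index :: "('j,'v) mgraph \<Rightarrow> 'j \<times> 'v \<Rightarrow> nat" where
  "label_index G l = (SOME k. k < NN G \<and> glabels G ! k = l)"

lemma label_index_nth:
  assumes "wf_graph G" "k < NN G"
  shows "label_index G (glabels G ! k) = k"
proof -
  have "label_index G (glabels G ! k) < NN G
      \<and> glabels G ! label_index G (glabels G ! k) = glabels G ! k"
    unfolding label_index_def by (rule someI_ex) (use assms(2) in blast)
  then show ?thesis
    using distinct_glabels[OF assms(1)] assms(2) unfolding NN_def by (metis nth_eq_iff_index_eq)
qed

definition boundary_lift :: "('j,'v) mgraph \<Rightarrow> cvec \<Rightarrow> 'j \<Rightarrow> real \<Rightarrow> complex" where
  "boundary_lift G w j =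
     edge_profile G j (w (label_index G (j, g_ini G j))) (w (label_index G (j, g_ter G j)))"

lemma boundary_values_boundary_lift:
  assumes "wf_graph G" "w \<in> vecs (NN G)"
  shows "boundary_values G (boundary_lift G w) = w"
proof
  fix k
  show "boundary_values G (boundary_lift G w) k = w k"
  proof (cases "k < NN G")
    case True
    obtain j v where jv: "glabels G ! k = (j, v)" by fastforce
    have "incident G j v" "label_index G (j, v) = k"
      using glabels_nth(2)[OF True jv] label_index_nth[OF assms(1) True] jv by auto
    then show ?thesis
      using True jv
      by (auto simp: boundary_values_def boundary_lift_def bdry_def incident_def
          bl_edge_profile br_edge_profile[OF assms(1)])
  qed (use assms(2) in \<open>simp add: vecs_def\<close>)
qed

lemma boundary_lift_isderiv: "wf_graph G \<Longrightarrow> \<exists>g. isderiv (Ij G j) (boundary_lift G w j) g"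
  unfolding boundary_lift_def by (rule exI edge_profile_isderiv)+

lemma Dmax_boundary_surj:
  assumes wf: "wf_graph G" and "x \<in> vecs (NN G)" "y \<in> vecs (NN G)"
  shows "\<exists>Phi Psi. (Phi, Psi) \<in> Dmax G m \<and> gam1 G Phi = x \<and> gam2 G Phi = y"
proof -
  \<comment> \<open>The diagonal entries of tilde V_C square to -1, so Gamma2 takes the trace y' to y.\<close>
  define y' where "y' = (\<lambda>k. - Vt G k k * y k)"
  have "y' \<in> vecs (NN G)"
    using assms(3) by (simp add: y'_def vecs_def Vt_def)
  have "\<forall>j. \<exists>g. isderiv (Ij G j) (boundary_lift G w j) g" for w
    using boundary_lift_isderiv[OF wf] by blast
  then obtain g1 g2 where "\<forall>j. isderiv (Ij G j) (boundary_lift G x j) (g1 j)"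
    and "\<forall>j. isderiv (Ij G j) (boundary_lift G y' j) (g2 j)"
    using choice by meson
  then have "edgewise_deriv G (\<lambda>j t. (boundary_lift G x j t, boundary_lift G y' j t))
      (\<lambda>j t. (g1 j t, g2 j t))"
    unfolding edgewise_deriv_def by simp
  moreover have "gam1 G (\<lambda>j t. (boundary_lift G x j t, boundary_lift G y' j t)) = x"
    using boundary_values_boundary_lift[OF wf assms(2)] by (simp add: gam1_eq_boundary_values)
  moreover have "Vt G k k * y' k = y k" for k
    using Vt_diag_cases[OF wf, of k] assms(3) by (cases "k < NN G") (auto simp: y'_def vecs_def)
  then have "gam2 G (\<lambda>j t. (boundary_lift G x j t, boundary_lift G y' j t)) = y"
    using boundary_values_boundary_lift[OF wf \<open>y' \<in> vecs (NN G)\<close>]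
    by (simp add: gam2_eq_boundary_values)
  ultimately show ?thesis
    using Dmax_if_edgewise_deriv by blast
qed

lemma DTheta_eq_iff:
  assumes "wf_graph G" "Th1 \<subseteq> vecs (NN G) \<times> vecs (NN G)" "Th2 \<subseteq> vecs (NN G) \<times> vecs (NN G)"
  shows "DTheta G m Th1 = DTheta G m Th2 \<longleftrightarrow> Th1 = Th2"
proof
  assume eq: "DTheta G m Th1 = DTheta G m Th2"
  have "(x, y) \<in> Th'" if xy: "(x, y) \<in> Th" and Th: "Th \<subseteq> vecs (NN G) \<times> vecs (NN G)"
    and eq: "DTheta G m Th = DTheta G m Th'" for x y Th Th'
  proof -
    obtain Phi Psi where "(Phi, Psi) \<in> Dmax G m" "gam1 G Phi = x" "gam2 G Phi = y"
      using Dmax_boundary_surj[OF assms(1)] xy Th by blast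
    then show ?thesis
      using xy eq unfolding DTheta_def by auto
  qed
  then show "Th1 = Th2"
    using assms(2,3) eq by auto
qed simp

lemma DTheta_LamC:
  assumes "wf_graph G" "lin_rel (NN G) Lam"
  shows "DTheta G m (LamC G Lam) = neg_conj (DTheta G m (LamW G Lam))"
  using assms by (simp add: LamC_eq_conj_rel DTheta_conj_rel LamW_def subset_iff)

lemma Csym_DTheta_LamW_iff:
  assumes "wf_graph G" "lin_rel (NN G) Lam"
  shows "Csym (DTheta G m (LamW G Lam)) \<longleftrightarrow> LamW G Lam = LamC G Lam"
proof -
  have "LamW G Lam \<subseteq> vecs (NN G) \<times> vecs (NN G)" "LamC G Lam \<subseteq> vecs (NN G) \<times> vecs (NN G)"
    unfolding LamW_def LamC_def by auto
  then show ?thesis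
    using Csym_iff_neg_conj DTheta_LamC[OF assms] DTheta_eq_iff[OF assms(1)] by metis
qed

section \<open>Linear algebra\<close>

lemma (in vector_space_pair) linear_factor_through_on:
  assumes M: "Vector_Spaces.linear s1 s2 M" and M': "Vector_Spaces.linear s1 s2 M'"
    and S: "vs1.subspace S"
    and ker: "\<And>x. x \<in> S \<Longrightarrow> M x = 0 \<Longrightarrow> M' x = 0"
  shows "\<exists>h. Vector_Spaces.linear s2 s2 h \<and> (\<forall>x\<in>S. h (M x) = M' x)"
proof -
  obtain g where g: "g ` UNIV \<subseteq> S" "Vector_Spaces.linear s2 s1 g" "\<forall>v\<in>M ` S. M (g v) = v"
    using linear_exists_right_inverse_on[OF M S] by blast
  have "M' (g (M x)) = M' x" if "x \<in> S" for x
  proof -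
    have "g (M x) \<in> S"
      using g(1) by blast
    then have "g (M x) - x \<in> S" "M (g (M x) - x) = 0"
      using g(3) that vs1.subspace_diff[OF S] linear_diff[OF M] by auto
    then show ?thesis
      using ker linear_diff[OF M'] by fastforce
  qed
  then show ?thesis
    using Vector_Spaces.linear_compose[OF g(2) M'] by (intro exI[of _ "M' \<circ> g"]) auto
qed

lemma finite_bij_betw_extend:
  assumes "finite A" "finite B" "card A = card B" "A' \<subseteq> A" "inj_on h A'" "h ` A' \<subseteq> B"
  shows "\<exists>g. bij_betw g A B \<and> (\<forall>a\<in>A'. g a = h a)"
proof -
  have "finite A'"
    using assms(1,4) finite_subset by blast
  have "card (A - A') = card A - card A'"
    by (rule card_Diff_subset[OF \<open>finite A'\<close> assms(4)])
  also have "\<dots> = card B - card (h ` A')"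
    using assms(3) card_image[OF assms(5)] by simp
  also have "\<dots> = card (B - h ` A')"
    by (rule card_Diff_subset[OF finite_imageI[OF \<open>finite A'\<close>] assms(6), symmetric])
  finally obtain g where g: "bij_betw g (A - A') (B - h ` A')"
    using finite_same_card_bij[OF finite_Diff[OF assms(1)] finite_Diff[OF assms(2)]] by blast
  let ?g = "\<lambda>a. if a \<in> A' then h a else g a"
  have "bij_betw ?g A' (h ` A')"
    using bij_betw_imageI[OF assms(5) refl] by (rule bij_betw_cong[THEN iffD1, rotated]) simp
  moreover have "bij_betw ?g (A - A') (B - h ` A')"
    using g by (rule bij_betw_cong[THEN iffD1, rotated]) simp
  ultimately have "bij_betw ?g (A' \<union> (A - A')) (h ` A' \<union> (B - h ` A'))"
    by (rule bij_betw_combine) blast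
  moreover have "A' \<union> (A - A') = A" "h ` A' \<union> (B - h ` A') = B"
    using assms(4,6) by blast+
  ultimately show ?thesis
    by (intro exI[of _ ?g]) simp
qed

lemma (in vector_space) linear_automorphism_of_bases:
  assumes B: "independent B" and C: "independent C" "span C = span B" and g: "bij_betw g B C"
  shows "\<exists>X. Vector_Spaces.linear scale scale X \<and> (\<forall>b\<in>B. X b = g b)
    \<and> X ` span B = span B \<and> inj_on X (span B)"
proof -
  interpret p: vector_space_pair scale scale ..
  define X where "X = p.construct B g"
  have X: "Vector_Spaces.linear scale scale X" "\<forall>b\<in>B. X b = g b"
    unfolding X_def using p.linear_construct[OF B] p.construct_basis[OF B] by auto
  then have "X ` B = C" "inj_on X B"
    using g by (auto simp: bij_betw_def inj_on_def cong: image_cong)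
  moreover have "X ` span B = span (X ` B)"
    by (rule p.linear_span_image[OF X(1), symmetric])
  ultimately show ?thesis
    using X p.linear_inj_on_span_independent_image[OF X(1), of B] C by auto
qed

lemma (in vector_space) linear_extends_to_automorphism:
  assumes B0: "finite B0" and R: "subspace R" "R \<subseteq> span B0"
    and h: "Vector_Spaces.linear scale scale h" "inj_on h R" "h ` R \<subseteq> span B0"
  shows "\<exists>X. Vector_Spaces.linear scale scale X \<and> (\<forall>r\<in>R. X r = h r)
    \<and> X ` span B0 = span B0 \<and> inj_on X (span B0)"
proof -
  interpret p: vector_space_pair scale scale ..
  have basis: "finite B \<and> card B = dim (span B0) \<and> span B = span B0"
    if "B \<subseteq> span B0" "independent B" "span B0 \<subseteq> span B" for B
    using that independent_span_bound[OF B0] basis_card_eq_dim span_minimal[OF _ subspace_span]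
    by (metis span_span subset_antisym)
  obtain Bk where Bk: "Bk \<subseteq> R" "independent Bk" "R \<subseteq> span Bk"
    using maximal_independent_subset by blast
  have span_Bk: "span Bk = R"
    using Bk span_minimal[OF Bk(1) R(1)] by blast
  have "inj_on h Bk"
    using h(2) Bk(1) inj_on_subset by blast
  have "independent (h ` Bk)"
    using p.linear_independent_injective_image[OF h(1) Bk(2)] h(2) span_Bk by simp
  then obtain Cs where Cs: "h ` Bk \<subseteq> Cs" "Cs \<subseteq> span B0" "independent Cs" "span B0 \<subseteq> span Cs"
    using maximal_independent_subset_extend[of "h ` Bk" "span B0"] h(3) Bk(1) by blast
  obtain Bs where Bs: "Bk \<subseteq> Bs" "Bs \<subseteq> span B0" "independent Bs" "span B0 \<subseteq> span Bs"
    using maximal_independent_subset_extend[of Bk "span B0"] R(2) Bk by blast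
  obtain g where "bij_betw g Bs Cs" "\<forall>b\<in>Bk. g b = h b"
    using finite_bij_betw_extend[OF _ _ _ Bs(1) \<open>inj_on h Bk\<close> Cs(1)]
      basis[OF Bs(2-4)] basis[OF Cs(2-4)] by auto
  then obtain X where X: "Vector_Spaces.linear scale scale X" "\<forall>b\<in>Bk. X b = h b"
    "X ` span B0 = span B0" "inj_on X (span B0)"
    using linear_automorphism_of_bases[OF Bs(3) Cs(3)] basis[OF Bs(2-4)] basis[OF Cs(2-4)] Bs(1)
    by (metis subset_iff)
  then have "\<forall>r\<in>R. X r = h r"
    using p.linear_eq_on_span[OF X(1) h(1), of Bk] span_Bk by blast
  then show ?thesis
    using X by blast
qed

definition cscale :: "complex \<Rightarrow> cvec \<Rightarrow> cvec" where
  "cscale c f = (\<lambda>k. c * f k)"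

interpretation cvec: vector_space cscale
  by unfold_locales (auto simp: cscale_def algebra_simps fun_eq_iff)

interpretation cvec_lin: vector_space_pair cscale cscale ..

interpretation cvec_pair: vector_space_prod cscale cscale ..

interpretation cvec_pair_to_cvec: vector_space_pair cvec_pair.scale cscale ..

definition unit_vec :: "nat \<Rightarrow> cvec" where
  "unit_vec l = (\<lambda>k. if k = l then 1 else 0)"

lemma cscale_apply [simp]: "cscale c f k = c * f k"
  by (simp add: cscale_def)

lemma sum_cvec_apply: "(\<Sum>i\<in>S. f i) k = (\<Sum>i\<in>S. (f i :: cvec) k)"
  by (induction S rule: infinite_finite_induct) auto

lemma vecs_subspace: "cvec.subspace (vecs n)"
  unfolding cvec.subspace_def vecs_def by auto

lemma vecs_unit_vec_expansion:
  assumes "f \<in> vecs n"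
  shows "f = (\<Sum>l<n. cscale (f l) (unit_vec l))"
proof
  fix x
  have "(\<Sum>l<n. cscale (f l) (unit_vec l)) x = (\<Sum>l<n. if x = l then f l else 0)"
    unfolding sum_cvec_apply by (rule sum.cong) (auto simp: unit_vec_def)
  also have "\<dots> = f x"
    using assms by (simp add: sum.delta' vecs_def)
  finally show "f x = (\<Sum>l<n. cscale (f l) (unit_vec l)) x"
    by simp
qed

lemma vecs_eq_span_unit_vec: "vecs n = cvec.span (unit_vec ` {..<n})"
proof
  show "cvec.span (unit_vec ` {..<n}) \<subseteq> vecs n"
    by (rule cvec.span_minimal[OF _ vecs_subspace]) (auto simp: unit_vec_def vecs_def)
  show "vecs n \<subseteq> cvec.span (unit_vec ` {..<n})"
  proof
    fix f assume "f \<in> vecs n"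
    then have "f = (\<Sum>l<n. cscale (f l) (unit_vec l))"
      by (rule vecs_unit_vec_expansion)
    also have "\<dots> \<in> cvec.span (unit_vec ` {..<n})"
      by (intro cvec.span_sum cvec.span_scale cvec.span_base) auto
    finally show "f \<in> cvec.span (unit_vec ` {..<n})" .
  qed
qed

lemma mv_linear: "Vector_Spaces.linear cscale cscale (mv n M)"
  unfolding Vector_Spaces.linear_iff
  by (auto intro!: ext simp: mv_def sum.distrib sum_distrib_left algebra_simps
      cvec.vector_space_axioms)

lemma mv_unit_vec: "l < n \<Longrightarrow> mv n M (unit_vec l) = (\<lambda>k. if k < n then M k l else 0)"
  unfolding mv_def unit_vec_def by (auto intro!: ext simp: if_distrib cong: if_cong)

definition matrix_of :: "(cvec \<Rightarrow> cvec) \<Rightarrow> cmat" where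
  "matrix_of X = (\<lambda>k l. X (unit_vec l) k)"

lemma mv_matrix_of:
  assumes "Vector_Spaces.linear cscale cscale X" "\<And>v. v \<in> vecs n \<Longrightarrow> X v \<in> vecs n" "f \<in> vecs n"
  shows "mv n (matrix_of X) f = X f"
proof -
  have "X f = X (\<Sum>l<n. cscale (f l) (unit_vec l))"
    using vecs_unit_vec_expansion[OF assms(3)] by (rule arg_cong)
  also have "\<dots> = (\<Sum>l<n. cscale (f l) (X (unit_vec l)))"
    by (simp add: cvec_lin.linear_sum[OF assms(1)] cvec_lin.linear_scale[OF assms(1)])
  finally have "X f = (\<Sum>l<n. cscale (f l) (X (unit_vec l)))" .
  then show ?thesis
    using assms(2)[OF assms(3)]
    by (auto intro!: ext simp: mv_def matrix_of_def sum_cvec_apply vecs_def mult.commute)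
qed

lemma mv_zero [simp]: "mv n M 0 = 0"
  unfolding mv_def by auto

lemma mm_apply_col: "k < n \<Longrightarrow> l < n \<Longrightarrow> mm n A M k l = mv n A (mv n M (unit_vec l)) k"
  by (simp add: mv_unit_vec) (simp add: mm_def mv_def)

lemma bij_mat_matrix_of:
  assumes X: "Vector_Spaces.linear cscale cscale X" and onto: "X ` vecs n = vecs n"
    and inj: "inj_on X (vecs n)"
  shows "bij_mat n (matrix_of X)"
proof -
  obtain Y where Y: "range Y \<subseteq> vecs n" "Vector_Spaces.linear cscale cscale Y"
    "\<forall>v\<in>vecs n. Y (X v) = v"
    using cvec_lin.linear_exists_left_inverse_on[OF X vecs_subspace inj] by blast
  have XY: "X (Y v) = v" if "v \<in> vecs n" for v
    using that onto Y(3) by force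
  have matrix_of_apply: "mv n (matrix_of Z) f = Z f"
    if "Vector_Spaces.linear cscale cscale Z" "Z ` vecs n \<subseteq> vecs n" "f \<in> vecs n" for Z f
    using mv_matrix_of[OF that(1) _ that(3)] that(2) by blast
  have inverse: "meq n (mm n (matrix_of Z) (matrix_of Z')) idm"
    if Z: "Vector_Spaces.linear cscale cscale Z" "Z ` vecs n \<subseteq> vecs n"
      and Z': "Vector_Spaces.linear cscale cscale Z'" "Z' ` vecs n \<subseteq> vecs n"
      and ZZ': "\<And>v. v \<in> vecs n \<Longrightarrow> Z (Z' v) = v" for Z Z'
    unfolding meq_def
  proof (intro allI impI)
    fix k l assume "k < n" "l < n"
    then have "unit_vec l \<in> vecs n"
      by (simp add: unit_vec_def vecs_def)
    then show "mm n (matrix_of Z) (matrix_of Z') k l = idm k l"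
      using \<open>k < n\<close> \<open>l < n\<close> Z'(2)
      by (simp add: mm_apply_col matrix_of_apply[OF Z] matrix_of_apply[OF Z'] image_subset_iff ZZ')
        (simp add: unit_vec_def idm_def)
  qed
  show ?thesis
    unfolding bij_mat_def
    using inverse[OF X _ Y(2) _ XY] inverse[OF Y(2) _ X _ Y(3)[rule_format]] onto Y(1) by blast
qed

lemma linear_mv_diff: "Vector_Spaces.linear cvec_pair.scale cscale (\<lambda>(u, u'). mv n A u - mv n B u')"
proof -
  have "Vector_Spaces.linear cvec_pair.scale cscale (\<lambda>x. mv n A (fst x) - mv n B (snd x))"
    using Vector_Spaces.linear_compose[OF cvec_pair.linear_fst mv_linear]
      Vector_Spaces.linear_compose[OF cvec_pair.linear_snd mv_linear]
    by (intro cvec_pair_to_cvec.linear_compose_sub) (simp_all add: o_def)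
  then show ?thesis
    by (simp add: case_prod_beta')
qed

lemma vecs_automorphism_intertwining:
  assumes M: "Vector_Spaces.linear cvec_pair.scale cscale M"
    and M': "Vector_Spaces.linear cvec_pair.scale cscale M'"
    and range: "M ` (vecs n \<times> vecs n) \<subseteq> vecs n" "M' ` (vecs n \<times> vecs n) \<subseteq> vecs n"
    and ker: "\<And>x. x \<in> vecs n \<times> vecs n \<Longrightarrow> M x = 0 \<longleftrightarrow> M' x = 0"
  shows "\<exists>X. Vector_Spaces.linear cscale cscale X \<and> X ` vecs n = vecs n \<and> inj_on X (vecs n)
    \<and> (\<forall>x\<in>vecs n \<times> vecs n. X (M x) = M' x)"
proof -
  let ?S = "vecs n \<times> vecs n"
  have S: "cvec_pair.p.subspace ?S"
    by (rule cvec_pair.subspace_Times[OF vecs_subspace vecs_subspace])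
  obtain h where h: "Vector_Spaces.linear cscale cscale h" "\<forall>x\<in>?S. h (M x) = M' x"
    using cvec_pair_to_cvec.linear_factor_through_on[OF M M' S] ker by blast
  have "inj_on h (M ` ?S)"
    unfolding
      cvec_lin.linear_inj_on_iff_eq_0[OF h(1) cvec_pair_to_cvec.linear_subspace_image[OF M S]]
    using h(2) ker by auto
  moreover have "h ` M ` ?S \<subseteq> vecs n"
    using h(2) range(2) by auto
  ultimately obtain X where "Vector_Spaces.linear cscale cscale X" "\<forall>r\<in>M ` ?S. X r = h r"
    "X ` vecs n = vecs n" "inj_on X (vecs n)"
    using cvec.linear_extends_to_automorphism[of "unit_vec ` {..<n}" "M ` ?S" h]
      cvec_pair_to_cvec.linear_subspace_image[OF M S] range(1) h(1)
    unfolding vecs_eq_span_unit_vec by auto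
  then show ?thesis
    using h(2) by auto
qed

definition kernel_rel :: "nat \<Rightarrow> cmat \<Rightarrow> cmat \<Rightarrow> (cvec \<times> cvec) set" where
  "kernel_rel n A B = {(u, u'). u \<in> vecs n \<and> u' \<in> vecs n \<and> mv n A u = mv n B u'}"

lemma kernel_rel_subset: "kernel_rel n A B \<subseteq> vecs n \<times> vecs n"
  unfolding kernel_rel_def by auto

lemma meq_mm_matrix_of:
  assumes X: "Vector_Spaces.linear cscale cscale X" "X ` vecs n = vecs n"
    and XC: "\<And>f. f \<in> vecs n \<Longrightarrow> X (mv n C f) = mv n C' f"
  shows "meq n C' (mm n (matrix_of X) C)"
  unfolding meq_def
proof (intro allI impI)
  fix k l assume "k < n" "l < n"
  then have "unit_vec l \<in> vecs n"
    by (simp add: unit_vec_def vecs_def)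
  have Xv: "X v \<in> vecs n" if "v \<in> vecs n" for v
    using X(2) that by blast
  have "mm n (matrix_of X) C k l = mv n (matrix_of X) (mv n C (unit_vec l)) k"
    by (rule mm_apply_col[OF \<open>k < n\<close> \<open>l < n\<close>])
  also have "\<dots> = X (mv n C (unit_vec l)) k"
    by (simp only: mv_matrix_of[OF X(1) Xv mv_in_vecs])
  also have "\<dots> = C' k l"
    using XC[OF \<open>unit_vec l \<in> vecs n\<close>] \<open>k < n\<close> \<open>l < n\<close> by (simp add: mv_unit_vec)
  finally show "C' k l = mm n (matrix_of X) C k l" ..
qed

lemma kernel_rel_mm_left:
  assumes "bij_mat n X"
  shows "kernel_rel n (mm n X A) (mm n X B) = kernel_rel n A B"
proof -
  obtain Y where YX: "meq n (mm n Y X) idm"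
    using assms unfolding bij_mat_def by blast
  have "mv n X (mv n A u) = mv n X (mv n B u') \<longleftrightarrow> mv n A u = mv n B u'" for u u'
    by (metis mv_in_vecs mv_inverse[OF YX])
  then show ?thesis
    unfolding kernel_rel_def by (simp add: mv_mm)
qed

lemma kernel_rel_eq_iff:
  "kernel_rel n A B = kernel_rel n A' B'
    \<longleftrightarrow> (\<exists>X. bij_mat n X \<and> meq n A' (mm n X A) \<and> meq n B' (mm n X B))"
proof
  assume eq: "kernel_rel n A B = kernel_rel n A' B'"
  have range: "(\<lambda>(u, u'). mv n C u - mv n D u') ` (vecs n \<times> vecs n) \<subseteq> vecs n" for C D
    by (auto simp: vecs_def mv_def)
  have ker: "(\<lambda>(u, u'). mv n A u - mv n B u') x = 0 \<longleftrightarrow> (\<lambda>(u, u'). mv n A' u - mv n B' u') x = 0"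
    if "x \<in> vecs n \<times> vecs n" for x
  proof -
    have "x \<in> kernel_rel n A B \<longleftrightarrow> x \<in> kernel_rel n A' B'"
      by (simp only: eq)
    then show ?thesis
      using that by (auto simp: kernel_rel_def)
  qed
  obtain X where X: "Vector_Spaces.linear cscale cscale X" "X ` vecs n = vecs n" "inj_on X (vecs n)"
    and intertwines: "\<forall>x\<in>vecs n \<times> vecs n. X ((\<lambda>(u, u'). mv n A u - mv n B u') x)
        = (\<lambda>(u, u'). mv n A' u - mv n B' u') x"
    using vecs_automorphism_intertwining[OF linear_mv_diff linear_mv_diff range range ker] by blast
  have zero: "0 \<in> vecs n"
    by (simp add: vecs_def)
  have "X (mv n A f) = mv n A' f" "X (mv n B f) = mv n B' f" if "f \<in> vecs n" for f
    using bspec[OF intertwines, of "(f, 0)"] bspec[OF intertwines, of "(0, f)"] that zero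
      cvec_lin.linear_neg[OF X(1)] by auto
  then show "\<exists>X. bij_mat n X \<and> meq n A' (mm n X A) \<and> meq n B' (mm n X B)"
    using bij_mat_matrix_of[OF X] meq_mm_matrix_of[OF X(1,2)] by blast
next
  assume "\<exists>X. bij_mat n X \<and> meq n A' (mm n X A) \<and> meq n B' (mm n X B)"
  then obtain X where X: "bij_mat n X" and "meq n A' (mm n X A)" "meq n B' (mm n X B)"
    by blast
  then have "kernel_rel n A' B' = kernel_rel n (mm n X A) (mm n X B)"
    unfolding kernel_rel_def by (simp add: mv_meq[of n A'] mv_meq[of n B'])
  then show "kernel_rel n A B = kernel_rel n A' B'"
    by (simp add: kernel_rel_mm_left[OF X])
qed

section \<open>The matrix criterion\<close>

lemma LamW_preimage:
  assumes "wf_graph G" "S \<subseteq> vecs (NN G) \<times> vecs (NN G)"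
  shows "S = {(f, f'). f \<in> vecs (NN G) \<and> f' \<in> vecs (NN G)
                \<and> (mv (NN G) (Winv G) f, mv (NN G) (Winv G) f') \<in> LamW G S}"
  using assms(2) unfolding LamW_def by (auto simp: W_Winv_apply[OF assms(1)])

lemma LamW_eq_iff:
  assumes "wf_graph G" "S1 \<subseteq> vecs (NN G) \<times> vecs (NN G)" "S2 \<subseteq> vecs (NN G) \<times> vecs (NN G)"
  shows "LamW G S1 = LamW G S2 \<longleftrightarrow> S1 = S2"
  using LamW_preimage[OF assms(1,2)] LamW_preimage[OF assms(1,3)] by metis

lemma cnj_mv: "(\<lambda>k. cnj (mv n M f k)) = mv n (cnjm M) (\<lambda>k. cnj (f k))"
  unfolding mv_def cnjm_def by auto

lemma cnjm_Wm: "cnjm (Wm G) = Wm G"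
  unfolding cnjm_def Wm_def by (auto intro!: ext)

lemma cnj_VC: "wf_graph G \<Longrightarrow> (\<lambda>k. cnj (VC G g k)) = - mv (NN G) (Vt G) g"
  by (rule ext) (simp add: VC_apply mv_Vt cnj_Vt_diag)

lemma mem_LamC:
  assumes wf: "wf_graph G" and Lam: "Lam \<subseteq> vecs (NN G) \<times> vecs (NN G)"
  shows "(g, g') \<in> LamC G Lam \<longleftrightarrow> g \<in> vecs (NN G) \<and> g' \<in> vecs (NN G)
    \<and> (mv (NN G) (Wm G) (VC G g'), mv (NN G) (Wm G) (VC G g)) \<in> Lam"
proof
  assume "(g, g') \<in> LamC G Lam"
  then obtain f f' where "(f, f') \<in> Lam"
    "g = VC G (mv (NN G) (Winv G) f')" "g' = VC G (mv (NN G) (Winv G) f)"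
    unfolding LamC_def by blast
  moreover have "f \<in> vecs (NN G)" "f' \<in> vecs (NN G)"
    using Lam \<open>(f, f') \<in> Lam\<close> by auto
  ultimately show "g \<in> vecs (NN G) \<and> g' \<in> vecs (NN G)
      \<and> (mv (NN G) (Wm G) (VC G g'), mv (NN G) (Wm G) (VC G g)) \<in> Lam"
    by (simp add: VC_VC[OF wf] W_Winv_apply[OF wf])
next
  assume "g \<in> vecs (NN G) \<and> g' \<in> vecs (NN G)
      \<and> (mv (NN G) (Wm G) (VC G g'), mv (NN G) (Wm G) (VC G g)) \<in> Lam"
  then show "(g, g') \<in> LamC G Lam"
    unfolding LamC_def
    by (intro CollectI exI[of _ "mv (NN G) (Wm G) (VC G g')"] exI[of _ "mv (NN G) (Wm G) (VC G g)"])
      (simp add: VC_VC[OF wf] Winv_W_apply[OF wf])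
qed

lemma LamC_kernel_rel:
  assumes wf: "wf_graph G"
  defines "P \<equiv> mm (NN G) (Wm G) (mm (NN G) (Vt G) (Winv G))"
  shows "LamC G (kernel_rel (NN G) A B)
    = LamW G (kernel_rel (NN G) (mm (NN G) (cnjm B) P) (mm (NN G) (cnjm A) P))"
proof -
  let ?N = "NN G" and ?W = "mv (NN G) (Wm G)"
  have P: "mv ?N P (?W g) = ?W (mv ?N (Vt G) g)" if "g \<in> vecs ?N" for g
    using that by (simp add: P_def mv_mm Winv_W_apply[OF wf])
  have cnj_side: "(\<lambda>k. cnj (mv ?N M (?W (VC G g)) k)) = - mv ?N (mm ?N (cnjm M) P) (?W g)"
    if "g \<in> vecs ?N" for M g
    using that by (simp add: cnj_mv cnjm_Wm cnj_VC[OF wf] mv_mm P)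
      (simp add: mv_def fun_eq_iff sum_negf)
  have "mv ?N A (?W (VC G g')) = mv ?N B (?W (VC G g))
      \<longleftrightarrow> mv ?N (mm ?N (cnjm B) P) (?W g) = mv ?N (mm ?N (cnjm A) P) (?W g')"
    if "g \<in> vecs ?N" "g' \<in> vecs ?N" for g g'
  proof -
    have "mv ?N A (?W (VC G g')) = mv ?N B (?W (VC G g))
        \<longleftrightarrow> (\<lambda>k. cnj (mv ?N A (?W (VC G g')) k)) = (\<lambda>k. cnj (mv ?N B (?W (VC G g)) k))"
      by (metis complex_cnj_cnj ext)
    then show ?thesis
      using that by (simp add: cnj_side eq_commute)
  qed
  moreover have "kernel_rel ?N A B \<subseteq> vecs ?N \<times> vecs ?N"
    unfolding kernel_rel_def by auto
  ultimately show ?thesis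
    by (auto simp: mem_LamC[OF wf] kernel_rel_def LamW_def)
qed

lemma LamW_eq_LamC_iff_matrix:
  assumes "wf_graph G"
    and "Lam = {(f, f'). f \<in> vecs (NN G) \<and> f' \<in> vecs (NN G) \<and> mv (NN G) A f = mv (NN G) B f'}"
  shows "LamW G Lam = LamC G Lam \<longleftrightarrow>
    (\<exists>X. bij_mat (NN G) X
      \<and> meq (NN G) (mm (NN G) (cnjm B) (mm (NN G) (Wm G) (mm (NN G) (Vt G) (Winv G))))
           (mm (NN G) X A)
      \<and> meq (NN G) (mm (NN G) (cnjm A) (mm (NN G) (Wm G) (mm (NN G) (Vt G) (Winv G))))
           (mm (NN G) X B))"
  using assms(2) LamC_kernel_rel[OF assms(1)] kernel_rel_eq_iff
    LamW_eq_iff[OF assms(1) kernel_rel_subset kernel_rel_subset]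
  by (simp flip: kernel_rel_def)

theorem corollary4p22:
  fixes G :: "('j, 'v) mgraph" and m :: real and Lam :: "(cvec \<times> cvec) set"
  assumes "wf_graph G" and "m \<ge> 0" and "lin_rel (NN G) Lam"
  shows "(Csym (DTheta G m (LamW G Lam)) \<longleftrightarrow> LamW G Lam = LamC G Lam)
    \<and> (\<forall>A B. Lam = {(f, f'). f \<in> vecs (NN G) \<and> f' \<in> vecs (NN G)
                            \<and> mv (NN G) A f = mv (NN G) B f'} \<longrightarrow>
         (LamW G Lam = LamC G Lam \<longleftrightarrow>
          (\<exists>X. bij_mat (NN G) X
             \<and> meq (NN G) (mm (NN G) (cnjm B) (mm (NN G) (Wm G) (mm (NN G) (Vt G) (Winv G))))
                          (mm (NN G) X A)
             \<and> meq (NN G) (mm (NN G) (cnjm A) (mm (NN G) (Wm G) (mm (NN G) (Vt G) (Winv G))))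
                          (mm (NN G) X B))))
    \<and> (\<forall>lam.
         (lam \<in> spec_p (Hsp G) (nrm G) (DTheta G m (LamW G Lam))
            \<longleftrightarrow> - cnj lam \<in> spec_p (Hsp G) (nrm G) (DTheta G m (LamC G Lam)))
       \<and> (lam \<in> spec_c (Hsp G) (nrm G) (DTheta G m (LamW G Lam))
            \<longleftrightarrow> - cnj lam \<in> spec_c (Hsp G) (nrm G) (DTheta G m (LamC G Lam)))
       \<and> (lam \<in> spec_r (Hsp G) (nrm G) (DTheta G m (LamW G Lam))
            \<longleftrightarrow> - cnj lam \<in> spec_r (Hsp G) (nrm G) (DTheta G m (LamC G Lam)))
       \<and> (lam \<in> spec_d (Hsp G) (nrm G) (DTheta G m (LamW G Lam))
            \<longleftrightarrow> - cnj lam \<in> spec_d (Hsp G) (nrm G) (DTheta G m (LamC G Lam)))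
       \<and> (lam \<in> spec_ess (Hsp G) (nrm G) (DTheta G m (LamW G Lam))
            \<longleftrightarrow> - cnj lam \<in> spec_ess (Hsp G) (nrm G) (DTheta G m (LamC G Lam))))
    \<and> (Csym (DTheta G m (LamW G Lam)) \<longrightarrow>
         (\<forall>lam. lam \<in> spec (Hsp G) (nrm G) (DTheta G m (LamW G Lam))
                \<longleftrightarrow> - cnj lam \<in> spec (Hsp G) (nrm G) (DTheta G m (LamW G Lam))))"
proof -
  have neg: "neg_closed (DTheta G m (LamW G Lam))"
    by (rule neg_closed_DTheta_LamW[OF assms(1,3)])
  show ?thesis
    unfolding DTheta_LamC[OF assms(1,3)]
    by (intro conjI allI impI Csym_DTheta_LamW_iff[OF assms(1,3)]
        LamW_eq_LamC_iff_matrix[OF assms(1)] Hsp.spec_p_neg_conj_iff Hsp.spec_c_neg_conj_iff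
        Hsp.spec_r_neg_conj_iff Hsp.spec_d_neg_conj_iff[OF neg] Hsp.spec_ess_neg_conj_iff[OF neg]
        Hsp.spec_symmetric_if_Csym)
      assumption+
qed

end
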